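(* For every circuit $c$ there is a safe circuit $d$ such that $c$ and $d$ are equal modulo $E$.
   Context: A circuit is a morphism of the free symmetric strict monoidal category whose objects are natural numbers (tensor = addition) generated by $\mathsf{discard}:1\to 0$, $\mathsf{copy}:1\to 2$, $\mathsf{zero}:0\to1$, $\mathsf{add}:2\to1$, $\mathsf{one}:0\to 1$, $\mathsf{and}:2\to 1$, considered up to the laws of symmetric monoidal categories. Composition is diagrammatic ($f;g$ = first $f$ then $g$), $\sigma$ is the symmetry $2\to2$, $\mathsf{copy}_n$, $\mathsf{discard}_n$ are the evident composites. $E$ is the set of equations: $\mathsf{copy};\sigma=\mathsf{copy}$; $\mathsf{copy};(\mathsf{copy}\otimes \mathrm{id}_1)=\mathsf{copy};(\mathrm{id}_1\otimes\mathsf{copy})$; $\mathsf{copy};(\mathsf{discard}\otimes\mathrm{id}_1)=\mathrm{id}_1$; for every circuit $f:a\to b$, $f;\mathsf{copy}_b=\mathsf{copy}_a;(f\otimes f)$ and $f;\mathsf{discard}_b=\mathsf{discard}_a$; commutativity, associativity and unit laws for $(\mathsf{add},\mathsf{zero})$ and for $(\mathsf{and},\mathsf{one})$; $\mathsf{copy};\mathsf{and}=\mathrm{id}_1$; $\mathsf{copy};\mathsf{add}=\mathsf{discard};\mathsf{zero}$; and distributivity $(\mathrm{id}_1\otimes\mathsf{add});\mathsf{and}=(\mathsf{copy}\otimes\mathrm{id}_2);(\mathrm{id}_1\otimes\sigma\otimes\mathrm{id}_1);(\mathsf{and}\otimes\mathsf{and});\mathsf{add}$. "Equal modulo $E$"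 means related by the smallest congruence (w.r.t. composition and tensor) containing $E$; morphisms of the quotient are the boolean circuits, which correspond exactly to boolean functions $\mathbb{Z}_2^a\to\mathbb{Z}_2^b$ (with $\mathsf{add}$ = XOR, $\mathsf{and}$ = AND). View a circuit as a directed graph whose nodes are wires and whose edges go from each input wire of a generator occurrence to each of its output wires. A circuit $c$ is safe if for every occurrence of $\mathsf{and}$ in $c$, there is no input port of $c$ from which both input ports of that $\mathsf{and}$ are reachable by a forward path. *)

theory Defs
  imports Main
begin

datatype gen = Discard | Copy | Zero | Add | One | And

fun gen_dom :: "gen \<Rightarrow> nat" where
  "gen_dom Discard = 1" | "gen_dom Copy = 1" | "gen_dom Zero = 0"
| "gen_dom Add = 2" | "gen_dom One = 0" | "gen_dom And = 2"

fun gen_cod :: "gen \<Rightarrow> nat" where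
  "gen_cod Discard = 0" | "gen_cod Copy = 2" | "gen_cod Zero = 1"
| "gen_cod Add = 1" | "gen_cod One = 1" | "gen_cod And = 1"

text \<open>Terms: generators, identities, the symmetry 2 -> 2, diagrammatic composition
  (Seq f g = f;g) and tensor.\<close>
datatype circ = Gen gen | Id nat | Sym | Seq circ circ | Par circ circ

inductive typed :: "circ \<Rightarrow> nat \<Rightarrow> nat \<Rightarrow> bool" where
  "typed (Gen g) (gen_dom g) (gen_cod g)"
| "typed (Id n) n n"
| "typed Sym 2 2"
| "typed f a k \<Longrightarrow> typed g k b \<Longrightarrow> typed (Seq f g) a b"
| "typed f a b \<Longrightarrow> typed g c d \<Longrightarrow> typed (Par f g) (a + c) (b + d)"

text \<open>braid n : 1+n -> n+1 moves the first wire past n wires.\<close>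
fun braid :: "nat \<Rightarrow> circ" where
  "braid 0 = Id 1"
| "braid (Suc n) = Seq (Par Sym (Id n)) (Par (Id 1) (braid n))"

fun swap :: "nat \<Rightarrow> nat \<Rightarrow> circ" where
  "swap 0 n = Id n"
| "swap (Suc m) n = Seq (Par (Id 1) (swap m n)) (Par (braid n) (Id m))"

text \<open>copy_n : n -> 2n, with outputs (x_1..x_n, x_1..x_n).\<close>
fun copyn :: "nat \<Rightarrow> circ" where
  "copyn 0 = Id 0"
| "copyn (Suc n) = Seq (Par (Gen Copy) (copyn n)) (Par (Id 1) (Par (braid n) (Id n)))"

fun discardn :: "nat \<Rightarrow> circ" where
  "discardn 0 = Id 0"
| "discardn (Suc n) = Par (Gen Discard) (discardn n)"

inductive eqv :: "circ \<Rightarrow> circ \<Rightarrow> bool" where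
  refl: "eqv f f"
| sym: "eqv f g \<Longrightarrow> eqv g f"
| trans: "eqv f g \<Longrightarrow> eqv g h \<Longrightarrow> eqv f h"
| cong_seq: "eqv f f' \<Longrightarrow> eqv g g' \<Longrightarrow> eqv (Seq f g) (Seq f' g')"
| cong_par: "eqv f f' \<Longrightarrow> eqv g g' \<Longrightarrow> eqv (Par f g) (Par f' g')"
| seq_assoc: "typed f a b \<Longrightarrow> typed g b c \<Longrightarrow> typed h c d \<Longrightarrow>
     eqv (Seq (Seq f g) h) (Seq f (Seq g h))"
| seq_idl: "typed f a b \<Longrightarrow> eqv (Seq (Id a) f) f"
| seq_idr: "typed f a b \<Longrightarrow> eqv (Seq f (Id b)) f"
| par_assoc: "typed f a b \<Longrightarrow> typed g c d \<Longrightarrow> typed h e k \<Longrightarrow>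
     eqv (Par (Par f g) h) (Par f (Par g h))"
| par_unitl: "typed f a b \<Longrightarrow> eqv (Par (Id 0) f) f"
| par_unitr: "typed f a b \<Longrightarrow> eqv (Par f (Id 0)) f"
| par_id: "eqv (Par (Id m) (Id n)) (Id (m + n))"
| interchange: "typed f a b \<Longrightarrow> typed f' b c \<Longrightarrow> typed g d e \<Longrightarrow> typed g' e k \<Longrightarrow>
     eqv (Seq (Par f g) (Par f' g')) (Par (Seq f f') (Seq g g'))"
| sym_invol: "eqv (Seq Sym Sym) (Id 2)"
| yang_baxter: "eqv (Seq (Seq (Par Sym (Id 1)) (Par (Id 1) Sym)) (Par Sym (Id 1)))
                    (Seq (Seq (Par (Id 1) Sym) (Par Sym (Id 1))) (Par (Id 1) Sym))"
| swap_nat: "typed f a b \<Longrightarrow> typed g c d \<Longrightarrow>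
     eqv (Seq (Par f g) (swap b d)) (Seq (swap a c) (Par g f))"
| copy_comm: "eqv (Seq (Gen Copy) Sym) (Gen Copy)"
| copy_assoc: "eqv (Seq (Gen Copy) (Par (Gen Copy) (Id 1))) (Seq (Gen Copy) (Par (Id 1) (Gen Copy)))"
| copy_unit: "eqv (Seq (Gen Copy) (Par (Gen Discard) (Id 1))) (Id 1)"
| copy_nat: "typed f a b \<Longrightarrow> eqv (Seq f (copyn b)) (Seq (copyn a) (Par f f))"
| discard_nat: "typed f a b \<Longrightarrow> eqv (Seq f (discardn b)) (discardn a)"
| add_comm: "eqv (Seq Sym (Gen Add)) (Gen Add)"
| add_assoc: "eqv (Seq (Par (Gen Add) (Id 1)) (Gen Add)) (Seq (Par (Id 1) (Gen Add)) (Gen Add))"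
| add_unit: "eqv (Seq (Par (Gen Zero) (Id 1)) (Gen Add)) (Id 1)"
| and_comm: "eqv (Seq Sym (Gen And)) (Gen And)"
| and_assoc: "eqv (Seq (Par (Gen And) (Id 1)) (Gen And)) (Seq (Par (Id 1) (Gen And)) (Gen And))"
| and_unit: "eqv (Seq (Par (Gen One) (Id 1)) (Gen And)) (Id 1)"
| copy_and: "eqv (Seq (Gen Copy) (Gen And)) (Id 1)"
| copy_add: "eqv (Seq (Gen Copy) (Gen Add)) (Seq (Gen Discard) (Gen Zero))"
| distrib: "eqv (Seq (Par (Id 1) (Gen Add)) (Gen And))
     (Seq (Seq (Seq (Par (Gen Copy) (Id 2)) (Par (Id 1) (Par Sym (Id 1))))
               (Par (Gen And) (Gen And))) (Gen Add))"

fun cdom :: "circ \<Rightarrow> nat" where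
  "cdom (Gen g) = gen_dom g"
| "cdom (Id n) = n"
| "cdom Sym = 2"
| "cdom (Seq f g) = cdom f"
| "cdom (Par f g) = cdom f + cdom g"

text \<open>Given, for each input wire of a circuit, the set of input ports of the ambient circuit
  from which that wire is reachable by a forward path in the wire graph, compute the
  same for each output wire. Edges go from each input wire of a generator to each of
  its output wires; identities and symmetries just route wires.\<close>
fun outdeps :: "nat set list \<Rightarrow> circ \<Rightarrow> nat set list" where
  "outdeps ds (Gen g) = replicate (gen_cod g) (\<Union> (set ds))"
| "outdeps ds (Id n) = ds"
| "outdeps ds Sym = rev ds"
| "outdeps ds (Seq f g) = outdeps (outdeps ds f) g"
| "outdeps ds (Par f g) = outdeps (take (cdom f) ds) f @ outdeps (drop (cdom f) ds) g"

text \<open>safe_in ds c: no occurrence of and in c has both input wires reachable from a common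
  input port, where ds gives the reachability sets of c's input wires.\<close>
fun safe_in :: "nat set list \<Rightarrow> circ \<Rightarrow> bool" where
  "safe_in ds (Gen g) = (g = And \<longrightarrow> ds ! 0 \<inter> ds ! 1 = {})"
| "safe_in ds (Id n) = True"
| "safe_in ds Sym = True"
| "safe_in ds (Seq f g) = (safe_in ds f \<and> safe_in (outdeps ds f) g)"
| "safe_in ds (Par f g) = (safe_in (take (cdom f) ds) f \<and> safe_in (drop (cdom f) ds) g)"

text \<open>Input port i of c is the wire reachable exactly from i (paths of length 0).\<close>
definition safe :: "circ \<Rightarrow> bool" where
  "safe c = safe_in (map (\<lambda>i. {i}) [0..<cdom c]) c"

end

theory Submission
  imports Defs
begin

text \<open>
  Read a circuit \<open>c : a \<rightarrow> b\<close> symbolically: feeding it one variable per input yields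
  one boolean expression over these variables per output. Modulo \<open>E\<close>, \<open>c\<close> equals the circuit that
  copies its inputs \<open>b\<close> times and evaluates these expressions side by side; and since
  the equations \<open>E\<close> contain the axioms of boolean rings (\<open>x \<and> x = x\<close>, \<open>x \<oplus> x = 0\<close>), each
  expression may be replaced by its algebraic normal form, an XOR of monomials that
  are conjunctions of pairwise distinct variables. In the circuit of such a normal
  form every \<open>and\<close> combines a variable with a monomial not containing it, so its two
  inputs are reachable from disjoint sets of input ports: the circuit is safe.
\<close>

notation eqv (infix "\<approx>" 50)

lemmas [trans] = eqv.trans

abbreviation Disc :: circ where "Disc \<equiv> Gen Discard"
abbreviation Cpy :: circ where "Cpy \<equiv> Gen Copy"

fun arity :: "circ \<Rightarrow> (nat \<times> nat) option" where
  "arity (Gen g) = Some (gen_dom g, gen_cod g)"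
| "arity (Id n) = Some (n, n)"
| "arity Sym = Some (2, 2)"
| "arity (Seq f g) = (case (arity f, arity g) of
     (Some (a, k), Some (k', b)) \<Rightarrow> if k = k' then Some (a, b) else None | _ \<Rightarrow> None)"
| "arity (Par f g) = (case (arity f, arity g) of
     (Some (a, b), Some (c, d)) \<Rightarrow> Some (a + c, b + d) | _ \<Rightarrow> None)"

lemma typed_iff_arity: "typed c a b \<longleftrightarrow> arity c = Some (a, b)"
proof
  show "typed c a b \<Longrightarrow> arity c = Some (a, b)"
    by (induction rule: typed.induct) auto
  show "arity c = Some (a, b) \<Longrightarrow> typed c a b"
  proof (induction c arbitrary: a b)
    case (Seq f g)
    then show ?case by (auto split: option.splits if_splits) (blast intro: typed.intros)
  next
    case (Par f g)
    then show ?case by (auto split: option.splits) (blast intro: typed.intros)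
  qed (auto intro: typed.intros[simplified])
qed

lemma cdom_arity: "arity c = Some (a, b) \<Longrightarrow> cdom c = a"
  by (induction c arbitrary: a b) (auto split: option.splits if_splits)

lemma arity_braid [simp]: "arity (braid n) = Some (Suc n, Suc n)"
  by (induction n) auto

lemma arity_swap [simp]: "arity (swap m n) = Some (m + n, n + m)"
  by (induction m) auto

lemma arity_copyn [simp]: "arity (copyn n) = Some (n, n + n)"
  by (induction n) auto

lemma arity_discardn [simp]: "arity (discardn n) = Some (n, 0)"
  by (induction n) auto

lemma eqv_seq_assoc: "arity (Seq (Seq f g) h) \<noteq> None \<Longrightarrow> Seq (Seq f g) h \<approx> Seq f (Seq g h)"
  by (auto simp: typed_iff_arity[symmetric] split: option.splits if_splits)
    (blast intro: eqv.seq_assoc)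

lemma eqv_seq_assoc': "arity (Seq (Seq f g) h) \<noteq> None \<Longrightarrow> Seq f (Seq g h) \<approx> Seq (Seq f g) h"
  by (rule eqv.sym, rule eqv_seq_assoc)

lemma eqv_seq_idl: "arity (Seq (Id a) f) \<noteq> None \<Longrightarrow> Seq (Id a) f \<approx> f"
  by (auto simp: typed_iff_arity[symmetric] split: option.splits if_splits)
    (blast intro: eqv.seq_idl)

lemma eqv_seq_idr: "arity (Seq f (Id b)) \<noteq> None \<Longrightarrow> Seq f (Id b) \<approx> f"
  by (auto simp: typed_iff_arity[symmetric] split: option.splits if_splits)
    (blast intro: eqv.seq_idr)

lemma eqv_par_assoc: "arity (Par (Par f g) h) \<noteq> None \<Longrightarrow> Par (Par f g) h \<approx> Par f (Par g h)"
  by (auto simp: typed_iff_arity[symmetric] split: option.splits)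
    (blast intro: eqv.par_assoc)

lemma eqv_par_assoc': "arity (Par (Par f g) h) \<noteq> None \<Longrightarrow> Par f (Par g h) \<approx> Par (Par f g) h"
  by (rule eqv.sym, rule eqv_par_assoc)

lemma eqv_par_unitl: "arity f \<noteq> None \<Longrightarrow> Par (Id 0) f \<approx> f"
  by (auto simp: typed_iff_arity[symmetric]) (blast intro: eqv.par_unitl)

lemma eqv_par_unitr: "arity f \<noteq> None \<Longrightarrow> Par f (Id 0) \<approx> f"
  by (auto simp: typed_iff_arity[symmetric]) (blast intro: eqv.par_unitr)

lemma eqv_interchange: "arity (Par (Seq f f') (Seq g g')) \<noteq> None \<Longrightarrow>
   Seq (Par f g) (Par f' g') \<approx> Par (Seq f f') (Seq g g')"
  by (auto simp: typed_iff_arity[symmetric] split: option.splits if_splits)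
    (blast intro: eqv.interchange)

lemma eqv_interchange': "arity (Par (Seq f f') (Seq g g')) \<noteq> None \<Longrightarrow>
   Par (Seq f f') (Seq g g') \<approx> Seq (Par f g) (Par f' g')"
  by (rule eqv.sym, rule eqv_interchange)

lemma eqv_swap_nat: "arity f = Some (a, b) \<Longrightarrow> arity g = Some (c, d) \<Longrightarrow>
   Seq (Par f g) (swap b d) \<approx> Seq (swap a c) (Par g f)"
  by (rule eqv.swap_nat) (auto simp: typed_iff_arity)

lemma eqv_copy_nat: "arity f = Some (a, b) \<Longrightarrow> Seq f (copyn b) \<approx> Seq (copyn a) (Par f f)"
  by (rule eqv.copy_nat) (auto simp: typed_iff_arity)

lemma eqv_discard_nat: "arity f = Some (a, b) \<Longrightarrow> Seq f (discardn b) \<approx> discardn a"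
  by (rule eqv.discard_nat) (auto simp: typed_iff_arity)

lemma eqv_par_Id: "k = m + n \<Longrightarrow> Par (Id m) (Id n) \<approx> Id k"
  using eqv.par_id by simp

lemma eqv_par_Id': "k = m + n \<Longrightarrow> Id k \<approx> Par (Id m) (Id n)"
  by (rule eqv.sym, rule eqv_par_Id)

lemma seq_cong_left: "f \<approx> f' \<Longrightarrow> Seq f g \<approx> Seq f' g"
  by (rule eqv.cong_seq) (auto intro: eqv.refl)

lemma seq_cong_right: "g \<approx> g' \<Longrightarrow> Seq f g \<approx> Seq f g'"
  by (rule eqv.cong_seq) (auto intro: eqv.refl)

lemma par_cong_left: "f \<approx> f' \<Longrightarrow> Par f g \<approx> Par f' g"
  by (rule eqv.cong_par) (auto intro: eqv.refl)

lemma par_cong_right: "g \<approx> g' \<Longrightarrow> Par f g \<approx> Par f g'"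
  by (rule eqv.cong_par) (auto intro: eqv.refl)

lemma discardn_add: "discardn (m + n) \<approx> Par (discardn m) (discardn n)"
proof (induction m)
  case 0
  show ?case by simp (rule eqv.sym, rule eqv_par_unitl, simp)
next
  case (Suc m)
  have "discardn (Suc m + n) = Par Disc (discardn (m + n))" by simp
  also have "... \<approx> Par Disc (Par (discardn m) (discardn n))" by (rule par_cong_right, rule Suc)
  also have "... \<approx> Par (Par Disc (discardn m)) (discardn n)" by (rule eqv_par_assoc') simp
  finally show ?case by simp
qed

lemma discardn_1: "discardn 1 \<approx> Disc"
  by (simp add: numeral_eq_Suc) (rule eqv_par_unitr, simp)

lemma eqv_seq_Id_Id: "Seq (Id n) (Id n) \<approx> Id n"
  by (rule eqv_seq_idl) simp

lemma eqv_par3_Id: "k = p + r + s \<Longrightarrow> Par (Id p) (Par (Id r) (Id s)) \<approx> Id k"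
  by (rule eqv.trans[OF par_cong_right[OF eqv_par_Id[OF HOL.refl]]], rule eqv_par_Id) simp

lemma swap_1_eqv_braid: "swap 1 n \<approx> braid n"
proof -
  have "swap 1 n = Seq (Par (Id 1) (Id n)) (Par (braid n) (Id 0))" by simp
  also have "... \<approx> Seq (Id (Suc n)) (Par (braid n) (Id 0))"
    by (rule seq_cong_left, rule eqv_par_Id) simp
  also have "... \<approx> Par (braid n) (Id 0)" by (rule eqv_seq_idl) simp
  also have "... \<approx> braid n" by (rule eqv_par_unitr) simp
  finally show ?thesis .
qed

lemma braid_1_eqv_Sym: "braid 1 \<approx> Sym"
proof -
  have "braid 1 = Seq (Par Sym (Id 0)) (Par (Id 1) (Id 1))" by (simp add: numeral_eq_Suc)
  also have "... \<approx> Seq Sym (Par (Id 1) (Id 1))" by (rule seq_cong_left, rule eqv_par_unitr) simp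
  also have "... \<approx> Seq Sym (Id 2)" by (rule seq_cong_right, rule eqv_par_Id) simp
  also have "... \<approx> Sym" by (rule eqv_seq_idr) simp
  finally show ?thesis .
qed

lemma braid_nat:
  assumes "arity f = Some (n, r)" and "arity g = Some (1, q)"
  shows "Seq (braid n) (Par f g) \<approx> Seq (Par g f) (swap q r)"
proof -
  have "Seq (braid n) (Par f g) \<approx> Seq (swap 1 n) (Par f g)"
    by (rule seq_cong_left, rule eqv.sym, rule swap_1_eqv_braid)
  also have "... \<approx> Seq (Par g f) (swap q r)"
    by (rule eqv.sym, rule eqv_swap_nat) (use assms in auto)
  finally show ?thesis .
qed

lemma braid_discard_Id:
  assumes f: "arity f = Some (n, 0)"
  shows "Seq (braid n) (Par f (Id 1)) \<approx> Par (Id 1) f"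
proof -
  have "Seq (braid n) (Par f (Id 1)) \<approx> Seq (Par (Id 1) f) (swap 1 0)"
    by (rule braid_nat[OF f]) simp
  also have "... \<approx> Seq (Par (Id 1) f) (Id 1)"
    using swap_1_eqv_braid[of 0] by (intro seq_cong_right) simp
  also have "... \<approx> Par (Id 1) f" by (rule eqv_seq_idr) (simp add: f)
  finally show ?thesis .
qed

lemma braid_Id_discard: "Seq (braid n) (Par (Id n) Disc) \<approx> Par Disc (Id n)"
proof -
  have "Seq (braid n) (Par (Id n) Disc) \<approx> Seq (Par Disc (Id n)) (swap 0 n)"
    by (rule braid_nat) simp_all
  also have "... \<approx> Par Disc (Id n)" by simp (rule eqv_seq_idr, simp)
  finally show ?thesis .
qed

lemma copy_unit_right: "Seq Cpy (Par (Id 1) Disc) \<approx> Id 1"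
proof -
  have "Seq Cpy (Par (Id 1) Disc) \<approx> Seq (Seq Cpy Sym) (Par (Id 1) Disc)"
    by (rule seq_cong_left, rule eqv.sym, rule eqv.copy_comm)
  also have "... \<approx> Seq Cpy (Seq Sym (Par (Id 1) Disc))" by (rule eqv_seq_assoc) simp
  also have "... \<approx> Seq Cpy (Seq (braid 1) (Par (Id 1) Disc))"
    by (rule seq_cong_right, rule seq_cong_left, rule eqv.sym, rule braid_1_eqv_Sym)
  also have "... \<approx> Seq Cpy (Par Disc (Id 1))" by (rule seq_cong_right, rule braid_Id_discard)
  also have "... \<approx> Id 1" by (rule eqv.copy_unit)
  finally show ?thesis .
qed

lemma seq_Id_commute: "arity f = Some (a, b) \<Longrightarrow> Seq (Id a) f \<approx> Seq f (Id b)"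
  by (rule eqv.trans, rule eqv_seq_idl, simp, rule eqv.sym, rule eqv_seq_idr) simp

text \<open>\<open>copyn (Suc n)\<close> is \<open>Copy \<otimes> copyn n\<close> followed by the wiring \<open>1 \<otimes> braid n \<otimes> n\<close>, which
  moves the second copy of the first wire past \<open>n\<close> wires; by naturality of the braid this
  wiring can be pushed through any four circuits applied to the outputs.\<close>

lemma copyn_wiring_nat:
  assumes A: "arity A = Some (1, p)" and B: "arity B = Some (n, r)"
    and C: "arity C = Some (1, q)" and D: "arity D = Some (n, s)"
  shows "Seq (Par (Id 1) (Par (braid n) (Id n))) (Par (Par A B) (Par C D))
    \<approx> Seq (Par (Par A C) (Par B D)) (Par (Id p) (Par (swap q r) (Id s)))"
proof -
  let ?R = "Par (Id 1) (Par (braid n) (Id n))" and ?S = "Par (Id p) (Par (swap q r) (Id s))"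
  have "Par (Par A B) (Par C D) \<approx> Par A (Par B (Par C D))"
    by (rule eqv_par_assoc) (simp add: A B C D)
  also have "... \<approx> Par A (Par (Par B C) D)"
    by (rule par_cong_right, rule eqv_par_assoc') (simp add: B C D)
  finally have "Seq ?R (Par (Par A B) (Par C D)) \<approx> Seq ?R (Par A (Par (Par B C) D))"
    by (rule seq_cong_right)
  also have "... \<approx> Par (Seq (Id 1) A) (Seq (Par (braid n) (Id n)) (Par (Par B C) D))"
    by (rule eqv_interchange) (simp add: A B C D)
  also have "... \<approx> Par (Seq (Id 1) A) (Par (Seq (braid n) (Par B C)) (Seq (Id n) D))"
    by (rule par_cong_right, rule eqv_interchange) (simp add: B C D)
  also have "... \<approx> Par (Seq A (Id p)) (Par (Seq (Par C B) (swap q r)) (Seq D (Id s)))"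
    by (intro eqv.cong_par seq_Id_commute braid_nat[OF B C] A D)
  also have "... \<approx> Par (Seq A (Id p)) (Seq (Par (Par C B) D) (Par (swap q r) (Id s)))"
    by (rule par_cong_right, rule eqv_interchange') (simp add: B C D)
  also have "... \<approx> Seq (Par A (Par (Par C B) D)) ?S"
    by (rule eqv_interchange') (simp add: A B C D)
  also have "... \<approx> Seq (Par A (Par C (Par B D))) ?S"
    by (rule seq_cong_left, rule par_cong_right, rule eqv_par_assoc) (simp add: B C D)
  also have "... \<approx> Seq (Par (Par A C) (Par B D)) ?S"
    by (rule seq_cong_left, rule eqv_par_assoc') (simp add: A B C D)
  finally show ?thesis .
qed

lemma copyn_Suc_par:
  assumes A: "arity A = Some (1, p)" and B: "arity B = Some (n, r)"
    and C: "arity C = Some (1, q)" and D: "arity D = Some (n, s)"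
  shows "Seq (copyn (Suc n)) (Par (Par A B) (Par C D))
    \<approx> Seq (Par (Seq Cpy (Par A C)) (Seq (copyn n) (Par B D))) (Par (Id p) (Par (swap q r) (Id s)))"
proof -
  let ?R = "Par (Id 1) (Par (braid n) (Id n))" and ?S = "Par (Id p) (Par (swap q r) (Id s))"
  have "Seq (copyn (Suc n)) (Par (Par A B) (Par C D))
      = Seq (Seq (Par Cpy (copyn n)) ?R) (Par (Par A B) (Par C D))"
    by simp
  also have "... \<approx> Seq (Par Cpy (copyn n)) (Seq ?R (Par (Par A B) (Par C D)))"
    by (rule eqv_seq_assoc) (simp add: A B C D)
  also have "... \<approx> Seq (Par Cpy (copyn n)) (Seq (Par (Par A C) (Par B D)) ?S)"
    by (rule seq_cong_right, rule copyn_wiring_nat[OF A B C D])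
  also have "... \<approx> Seq (Seq (Par Cpy (copyn n)) (Par (Par A C) (Par B D))) ?S"
    by (rule eqv_seq_assoc') (simp add: A B C D)
  also have "... \<approx> Seq (Par (Seq Cpy (Par A C)) (Seq (copyn n) (Par B D))) ?S"
    by (rule seq_cong_left, rule eqv_interchange) (simp add: A B C D)
  finally show ?thesis .
qed

lemma copyn_counit_left_Id: "Seq (copyn n) (Par (discardn n) (Id n)) \<approx> Id n"
proof (induction n)
  case 0
  show ?case by simp (rule eqv.trans, rule eqv_seq_idl, simp, rule eqv_par_Id, simp)
next
  case (Suc n)
  have "Seq (copyn (Suc n)) (Par (discardn (Suc n)) (Id (Suc n)))
      \<approx> Seq (copyn (Suc n)) (Par (Par Disc (discardn n)) (Par (Id 1) (Id n)))"
    by (simp, rule seq_cong_right, rule par_cong_right, rule eqv_par_Id') simp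
  also have "... \<approx> Seq (Par (Seq Cpy (Par Disc (Id 1))) (Seq (copyn n) (Par (discardn n) (Id n))))
      (Par (Id 0) (Par (swap 1 0) (Id n)))"
    by (rule copyn_Suc_par) simp_all
  also have "... \<approx> Seq (Par (Id 1) (Id n)) (Par (Id 0) (Par (Id 1) (Id n)))"
    using swap_1_eqv_braid[of 0]
    by (intro eqv.cong_seq eqv.cong_par eqv.copy_unit Suc.IH eqv.refl) simp
  also have "... \<approx> Seq (Id (Suc n)) (Id (Suc n))"
    by (intro eqv.cong_seq eqv_par_Id eqv_par3_Id) simp_all
  also have "... \<approx> Id (Suc n)" by (rule eqv_seq_Id_Id)
  finally show ?case .
qed

lemma copyn_counit_right_Id: "Seq (copyn n) (Par (Id n) (discardn n)) \<approx> Id n"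
proof (induction n)
  case 0
  show ?case by simp (rule eqv.trans, rule eqv_seq_idl, simp, rule eqv_par_Id, simp)
next
  case (Suc n)
  have "Seq (copyn (Suc n)) (Par (Id (Suc n)) (discardn (Suc n)))
      \<approx> Seq (copyn (Suc n)) (Par (Par (Id 1) (Id n)) (Par Disc (discardn n)))"
    by (simp, rule seq_cong_right, rule par_cong_left, rule eqv_par_Id') simp
  also have "... \<approx> Seq (Par (Seq Cpy (Par (Id 1) Disc)) (Seq (copyn n) (Par (Id n) (discardn n))))
      (Par (Id 1) (Par (swap 0 n) (Id 0)))"
    by (rule copyn_Suc_par) simp_all
  also have "... \<approx> Seq (Par (Id 1) (Id n)) (Par (Id 1) (Par (Id n) (Id 0)))"
    by (intro eqv.cong_seq eqv.cong_par copy_unit_right Suc.IH) (simp_all add: eqv.refl)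
  also have "... \<approx> Seq (Id (Suc n)) (Id (Suc n))"
    by (intro eqv.cong_seq eqv_par_Id eqv_par3_Id) simp_all
  also have "... \<approx> Id (Suc n)" by (rule eqv_seq_Id_Id)
  finally show ?case .
qed

lemma copyn_head_tail:
  "Seq (copyn (Suc n)) (Par (Par (Id 1) (discardn n)) (Par (discardn 1) (Id n))) \<approx> Id (Suc n)"
proof -
  have copy: "Seq Cpy (Par (Id 1) (discardn 1)) \<approx> Id 1"
    using par_cong_right[OF discardn_1, of "Id 1"]
    by (rule eqv.trans[OF seq_cong_right copy_unit_right])
  have "Seq (copyn (Suc n)) (Par (Par (Id 1) (discardn n)) (Par (discardn 1) (Id n)))
      \<approx> Seq (Par (Seq Cpy (Par (Id 1) (discardn 1))) (Seq (copyn n) (Par (discardn n) (Id n))))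
          (Par (Id 1) (Par (swap 0 0) (Id n)))"
    by (rule copyn_Suc_par) simp_all
  also have "... \<approx> Seq (Par (Id 1) (Id n)) (Par (Id 1) (Par (Id 0) (Id n)))"
    by (intro eqv.cong_seq eqv.cong_par copy copyn_counit_left_Id) (simp_all add: eqv.refl)
  also have "... \<approx> Seq (Id (Suc n)) (Id (Suc n))"
    by (intro eqv.cong_seq eqv_par_Id eqv_par3_Id) simp_all
  also have "... \<approx> Id (Suc n)" by (rule eqv_seq_Id_Id)
  finally show ?thesis .
qed

section \<open>Boolean expressions and the symbolic semantics of circuits\<close>

datatype bexp = Var nat | Fls | Tru | Xor bexp bexp | Conj bexp bexp

fun vars :: "bexp \<Rightarrow> nat set" where
  "vars (Var i) = {i}"
| "vars Fls = {}"
| "vars Tru = {}"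
| "vars (Xor e1 e2) = vars e1 \<union> vars e2"
| "vars (Conj e1 e2) = vars e1 \<union> vars e2"

definition vars_below :: "nat \<Rightarrow> bexp \<Rightarrow> bool" where
  "vars_below a e \<longleftrightarrow> (\<forall>v\<in>vars e. v < a)"

lemma vars_below_simps [simp]:
  "vars_below a (Var i) \<longleftrightarrow> i < a"
  "vars_below a Fls"
  "vars_below a Tru"
  "vars_below a (Xor e1 e2) \<longleftrightarrow> vars_below a e1 \<and> vars_below a e2"
  "vars_below a (Conj e1 e2) \<longleftrightarrow> vars_below a e1 \<and> vars_below a e2"
  by (auto simp: vars_below_def)

fun subst :: "bexp list \<Rightarrow> bexp \<Rightarrow> bexp" where
  "subst s (Var i) = s ! i"
| "subst s Fls = Fls"
| "subst s Tru = Tru"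
| "subst s (Xor e1 e2) = Xor (subst s e1) (subst s e2)"
| "subst s (Conj e1 e2) = Conj (subst s e1) (subst s e2)"

definition var_list :: "nat \<Rightarrow> bexp list" where
  "var_list n = map Var [0..<n]"

lemma length_var_list [simp]: "length (var_list n) = n"
  by (simp add: var_list_def)

lemma nth_var_list [simp]: "i < n \<Longrightarrow> var_list n ! i = Var i"
  by (simp add: var_list_def)

lemma vars_below_var_list: "\<forall>e\<in>set (var_list a). vars_below a e"
  by (auto simp: var_list_def)

lemma map_subst_var_list: "length s = k \<Longrightarrow> map (subst s) (var_list k) = s"
  by (auto simp: var_list_def intro: nth_equalityI)

lemma var_list_1: "var_list 1 = [Var 0]"
  by (simp add: var_list_def)

lemma var_list_2: "var_list 2 = [Var 0, Var 1]"
  by (simp add: var_list_def numeral_eq_Suc)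

lemma var_list_3: "var_list 3 = [Var 0, Var 1, Var 2]"
  by (simp add: var_list_def numeral_eq_Suc)

lemma subst_var_list: "vars_below a e \<Longrightarrow> subst (var_list a) e = e"
  by (induction e) auto

fun sem :: "circ \<Rightarrow> bexp list \<Rightarrow> bexp list" where
  "sem (Gen Discard) es = []"
| "sem (Gen Copy) es = [es ! 0, es ! 0]"
| "sem (Gen Zero) es = [Fls]"
| "sem (Gen One) es = [Tru]"
| "sem (Gen Add) es = [Xor (es ! 0) (es ! 1)]"
| "sem (Gen And) es = [Conj (es ! 0) (es ! 1)]"
| "sem (Id n) es = es"
| "sem Sym es = [es ! 1, es ! 0]"
| "sem (Seq f g) es = sem g (sem f es)"
| "sem (Par f g) es = sem f (take (cdom f) es) @ sem g (drop (cdom f) es)"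

lemma length_sem: "arity c = Some (a, b) \<Longrightarrow> length es = a \<Longrightarrow> length (sem c es) = b"
proof (induction c arbitrary: a b es)
  case (Gen g) then show ?case by (cases g) auto
next
  case (Par f g) then show ?case by (auto split: option.splits simp: cdom_arity)
qed (auto split: option.splits if_splits)

lemma sem_map_subst: "arity c = Some (a, b) \<Longrightarrow> length es = a \<Longrightarrow>
   sem c (map (subst s) es) = map (subst s) (sem c es)"
proof (induction c arbitrary: a b es)
  case (Gen g) then show ?case by (cases g) (auto simp: numeral_eq_Suc)
next
  case Sym then show ?case by (auto simp: numeral_eq_Suc)
next
  case (Seq f g) then show ?case by (auto split: option.splits if_splits simp: length_sem)
next
  case (Par f g) then show ?case by (auto split: option.splits simp: cdom_arity take_map drop_map)
qed auto

lemma sem_vars_below: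
  "arity c = Some (a, b) \<Longrightarrow> length es = a \<Longrightarrow> \<forall>e\<in>set es. vars_below n e \<Longrightarrow>
   \<forall>e\<in>set (sem c es). vars_below n e"
proof (induction c arbitrary: a b es)
  case (Gen g) then show ?case by (cases g) (auto simp: numeral_eq_Suc)
next
  case Sym then show ?case by (auto simp: numeral_eq_Suc)
next
  case (Seq f g)
  then obtain k where f: "arity f = Some (a, k)" and g: "arity g = Some (k, b)"
    by (auto split: option.splits if_splits)
  show ?case
    using Seq.IH(2)[OF g length_sem[OF f Seq.prems(2)] Seq.IH(1)[OF f Seq.prems(2,3)]] by simp
next
  case (Par f g)
  from Par.prems(1) obtain a1 b1 a2 b2
    where f: "arity f = Some (a1, b1)" and g: "arity g = Some (a2, b2)" and a: "a = a1 + a2"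
    by (auto split: option.splits)
  have "\<forall>e\<in>set (sem f (take a1 es)). vars_below n e"
    using Par.IH(1)[OF f, of "take a1 es"] Par.prems(2,3) a by (auto dest: in_set_takeD)
  moreover have "\<forall>e\<in>set (sem g (drop a1 es)). vars_below n e"
    using Par.IH(2)[OF g, of "drop a1 es"] Par.prems(2,3) a by (auto dest: in_set_dropD)
  ultimately show ?case by (auto simp: cdom_arity[OF f])
qed auto

lemma vars_below_sem_var_list:
  "arity c = Some (a, b) \<Longrightarrow> j < b \<Longrightarrow> vars_below a (sem c (var_list a) ! j)"
  using sem_vars_below[of c a b "var_list a" a] vars_below_var_list
    length_sem[of c a b "var_list a"]
  by auto

definition proj :: "nat \<Rightarrow> nat \<Rightarrow> circ" where
  "proj n i = Par (discardn i) (Par (Id 1) (discardn (n - Suc i)))"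

definition binop :: "nat \<Rightarrow> gen \<Rightarrow> circ \<Rightarrow> circ \<Rightarrow> circ" where
  "binop a g t1 t2 = Seq (Seq (copyn a) (Par t1 t2)) (Gen g)"

fun circ_of :: "nat \<Rightarrow> bexp \<Rightarrow> circ" where
  "circ_of a (Var i) = proj a i"
| "circ_of a Fls = Seq (discardn a) (Gen Zero)"
| "circ_of a Tru = Seq (discardn a) (Gen One)"
| "circ_of a (Xor e1 e2) = binop a Add (circ_of a e1) (circ_of a e2)"
| "circ_of a (Conj e1 e2) = binop a And (circ_of a e1) (circ_of a e2)"

fun tuple :: "nat \<Rightarrow> circ list \<Rightarrow> circ" where
  "tuple a [] = discardn a"
| "tuple a (t # ts) = Seq (copyn a) (Par t (tuple a ts))"

lemma arity_proj [simp]: "i < n \<Longrightarrow> arity (proj n i) = Some (n, 1)"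
  by (simp add: proj_def)

lemma arity_binop [simp]:
  "arity t1 = Some (a, 1) \<Longrightarrow> arity t2 = Some (a, 1) \<Longrightarrow> gen_dom g = 2 \<Longrightarrow>
   arity (binop a g t1 t2) = Some (a, gen_cod g)"
  by (simp add: binop_def)

lemma arity_circ_of [simp]: "vars_below a e \<Longrightarrow> arity (circ_of a e) = Some (a, 1)"
  by (induction e) auto

lemma arity_tuple [simp]:
  "\<forall>t\<in>set ts. arity t = Some (a, 1) \<Longrightarrow> arity (tuple a ts) = Some (a, length ts)"
  by (induction ts) auto

lemma par_as_seq_left:
  assumes f: "arity f = Some (a, 0)" and g: "arity g = Some (c, d)"
  shows "Par f g \<approx> Seq (Par f (Id c)) g"
proof -
  have "Par f g \<approx> Par (Seq f (Id 0)) (Seq (Id c) g)"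
    by (rule eqv.cong_par; rule eqv.sym)
      (rule eqv_seq_idr, simp add: f, rule eqv_seq_idl, simp add: g)
  also have "... \<approx> Seq (Par f (Id c)) (Par (Id 0) g)" by (rule eqv_interchange') (simp add: f g)
  also have "... \<approx> Seq (Par f (Id c)) g" by (rule seq_cong_right, rule eqv_par_unitl) (simp add: g)
  finally show ?thesis .
qed

lemma par_as_seq_right:
  assumes f: "arity f = Some (a, b)" and g: "arity g = Some (c, 0)"
  shows "Par f g \<approx> Seq (Par (Id a) g) f"
proof -
  have "Par f g \<approx> Par (Seq (Id a) f) (Seq g (Id 0))"
    by (rule eqv.cong_par; rule eqv.sym)
      (rule eqv_seq_idl, simp add: f, rule eqv_seq_idr, simp add: g)
  also have "... \<approx> Seq (Par (Id a) g) (Par f (Id 0))" by (rule eqv_interchange') (simp add: f g)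
  also have "... \<approx> Seq (Par (Id a) g) f" by (rule seq_cong_right, rule eqv_par_unitr) (simp add: f)
  finally show ?thesis .
qed

lemma copyn_counit_left:
  assumes t: "arity t = Some (a, b)"
  shows "Seq (copyn a) (Par (discardn a) t) \<approx> t"
proof -
  have "Seq (copyn a) (Par (discardn a) t) \<approx> Seq (copyn a) (Seq (Par (discardn a) (Id a)) t)"
    by (rule seq_cong_right, rule par_as_seq_left[OF _ t]) simp
  also have "... \<approx> Seq (Seq (copyn a) (Par (discardn a) (Id a))) t"
    by (rule eqv_seq_assoc') (simp add: t)
  also have "... \<approx> Seq (Id a) t" by (rule seq_cong_left, rule copyn_counit_left_Id)
  also have "... \<approx> t" by (rule eqv_seq_idl) (simp add: t)
  finally show ?thesis .
qed

lemma copyn_counit_right: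
  assumes t: "arity t = Some (a, b)"
  shows "Seq (copyn a) (Par t (discardn a)) \<approx> t"
proof -
  have "Seq (copyn a) (Par t (discardn a)) \<approx> Seq (copyn a) (Seq (Par (Id a) (discardn a)) t)"
    by (rule seq_cong_right, rule par_as_seq_right[OF t]) simp
  also have "... \<approx> Seq (Seq (copyn a) (Par (Id a) (discardn a))) t"
    by (rule eqv_seq_assoc') (simp add: t)
  also have "... \<approx> Seq (Id a) t" by (rule seq_cong_left, rule copyn_counit_right_Id)
  also have "... \<approx> t" by (rule eqv_seq_idl) (simp add: t)
  finally show ?thesis .
qed

lemma proj_add_left: "j < b \<Longrightarrow> proj (b + d) j \<approx> Par (proj b j) (discardn d)"
proof -
  assume j: "j < b"
  then have "proj (b + d) j = Par (discardn j) (Par (Id 1) (discardn ((b - Suc j) + d)))"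
    by (simp add: proj_def Suc_diff_le)
  also have "... \<approx> Par (discardn j) (Par (Id 1) (Par (discardn (b - Suc j)) (discardn d)))"
    by (rule par_cong_right, rule par_cong_right, rule discardn_add)
  also have "... \<approx> Par (discardn j) (Par (Par (Id 1) (discardn (b - Suc j))) (discardn d))"
    by (rule par_cong_right, rule eqv_par_assoc') simp
  also have "... \<approx> Par (Par (discardn j) (Par (Id 1) (discardn (b - Suc j)))) (discardn d)"
    by (rule eqv_par_assoc') simp
  finally show ?thesis by (simp add: proj_def)
qed

lemma proj_add_right: "i < d \<Longrightarrow> proj (b + d) (b + i) \<approx> Par (discardn b) (proj d i)"
proof -
  assume "i < d"
  have "proj (b + d) (b + i) = Par (discardn (b + i)) (Par (Id 1) (discardn (d - Suc i)))"
    by (simp add: proj_def)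
  also have "... \<approx> Par (Par (discardn b) (discardn i)) (Par (Id 1) (discardn (d - Suc i)))"
    by (rule par_cong_left, rule discardn_add)
  also have "... \<approx> Par (discardn b) (Par (discardn i) (Par (Id 1) (discardn (d - Suc i))))"
    by (rule eqv_par_assoc) simp
  finally show ?thesis by (simp add: proj_def)
qed

lemma proj_Suc_0: "proj (Suc n) 0 \<approx> Par (Id 1) (discardn n)"
  by (simp add: proj_def) (rule eqv_par_unitl, simp)

lemma proj_1_0: "proj 1 0 \<approx> Id 1"
proof -
  have "proj 1 0 \<approx> Par (Id 1) (discardn 0)" using proj_Suc_0[of 0] by simp
  also have "... \<approx> Id 1" by simp (rule eqv_par_unitr, simp)
  finally show ?thesis .
qed

lemma seq_binop:
  assumes f: "arity f = Some (a, k)" and t: "arity t1 = Some (k, 1)" "arity t2 = Some (k, 1)"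
    and g: "gen_dom g = 2"
  shows "Seq f (binop k g t1 t2) \<approx> binop a g (Seq f t1) (Seq f t2)"
proof -
  have "Seq f (binop k g t1 t2) = Seq f (Seq (Seq (copyn k) (Par t1 t2)) (Gen g))"
    by (simp add: binop_def)
  also have "... \<approx> Seq (Seq f (Seq (copyn k) (Par t1 t2))) (Gen g)"
    by (rule eqv_seq_assoc') (simp add: f t g)
  also have "... \<approx> Seq (Seq (Seq f (copyn k)) (Par t1 t2)) (Gen g)"
    by (rule seq_cong_left, rule eqv_seq_assoc') (simp add: f t g)
  also have "... \<approx> Seq (Seq (Seq (copyn a) (Par f f)) (Par t1 t2)) (Gen g)"
    by (rule seq_cong_left, rule seq_cong_left, rule eqv_copy_nat[OF f])
  also have "... \<approx> Seq (Seq (copyn a) (Seq (Par f f) (Par t1 t2))) (Gen g)"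
    by (rule seq_cong_left, rule eqv_seq_assoc) (simp add: f t g)
  also have "... \<approx> Seq (Seq (copyn a) (Par (Seq f t1) (Seq f t2))) (Gen g)"
    by (rule seq_cong_left, rule seq_cong_right, rule eqv_interchange) (simp add: f t g)
  finally show ?thesis by (simp add: binop_def)
qed

lemma binop_cong: "t1 \<approx> t1' \<Longrightarrow> t2 \<approx> t2' \<Longrightarrow> binop a g t1 t2 \<approx> binop a g t1' t2'"
  unfolding binop_def by (intro seq_cong_left seq_cong_right eqv.cong_par)

lemma seq_discardn_const:
  "arity f = Some (a, k) \<Longrightarrow> arity h = Some (0, m) \<Longrightarrow> Seq f (Seq (discardn k) h) \<approx> Seq (discardn a) h"
  by (rule eqv.trans, rule eqv_seq_assoc', simp, rule seq_cong_left, rule eqv_discard_nat)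

lemma seq_circ_of:
  "arity f = Some (a, k) \<Longrightarrow> length es = k \<Longrightarrow> \<forall>j<k. Seq f (proj k j) \<approx> circ_of a (es ! j) \<Longrightarrow>
   vars_below k e \<Longrightarrow> Seq f (circ_of k e) \<approx> circ_of a (subst es e)"
proof (induction e)
  case (Xor e1 e2)
  have "Seq f (circ_of k (Xor e1 e2)) \<approx> binop a Add (Seq f (circ_of k e1)) (Seq f (circ_of k e2))"
    using Xor.prems by simp (rule seq_binop, simp_all)
  also have "... \<approx> circ_of a (subst es (Xor e1 e2))"
    using Xor by simp (rule binop_cong, simp_all)
  finally show ?case .
next
  case (Conj e1 e2)
  have "Seq f (circ_of k (Conj e1 e2)) \<approx> binop a And (Seq f (circ_of k e1)) (Seq f (circ_of k e2))"
    using Conj.prems by simp (rule seq_binop, simp_all)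
  also have "... \<approx> circ_of a (subst es (Conj e1 e2))"
    using Conj by simp (rule binop_cong, simp_all)
  finally show ?case .
qed (simp_all add: seq_discardn_const)

lemma seq_tuple:
  "arity c = Some (a, b) \<Longrightarrow> \<forall>t\<in>set ts. arity t = Some (b, 1) \<Longrightarrow>
   Seq c (tuple b ts) \<approx> tuple a (map (Seq c) ts)"
proof (induction ts)
  case Nil
  then show ?case by (simp add: eqv_discard_nat)
next
  case (Cons t ts)
  have "Seq c (tuple b (t # ts)) = Seq c (Seq (copyn b) (Par t (tuple b ts)))" by simp
  also have "... \<approx> Seq (Seq c (copyn b)) (Par t (tuple b ts))"
    by (rule eqv_seq_assoc') (simp add: Cons.prems)
  also have "... \<approx> Seq (Seq (copyn a) (Par c c)) (Par t (tuple b ts))"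
    by (rule seq_cong_left, rule eqv_copy_nat, rule Cons.prems)
  also have "... \<approx> Seq (copyn a) (Seq (Par c c) (Par t (tuple b ts)))"
    by (rule eqv_seq_assoc) (simp add: Cons.prems)
  also have "... \<approx> Seq (copyn a) (Par (Seq c t) (Seq c (tuple b ts)))"
    by (rule seq_cong_right, rule eqv_interchange) (simp add: Cons.prems)
  also have "... \<approx> Seq (copyn a) (Par (Seq c t) (tuple a (map (Seq c) ts)))"
    using Cons by (intro seq_cong_right par_cong_right) simp
  finally show ?case by simp
qed

lemma tuple_cong: "list_all2 eqv ts ts' \<Longrightarrow> tuple a ts \<approx> tuple a ts'"
  by (induction ts ts' rule: list_all2_induct) (auto intro: eqv.refl seq_cong_right eqv.cong_par)

lemma tuple_Cons_seq_par:
  assumes "arity t = Some (a, 1)" and "arity (tuple a ts) = Some (a, n)"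
    and "arity X = Some (1, c)" and "arity Y = Some (n, d)"
  shows "Seq (tuple a (t # ts)) (Par X Y) \<approx> Seq (copyn a) (Par (Seq t X) (Seq (tuple a ts) Y))"
proof -
  have "Seq (tuple a (t # ts)) (Par X Y) \<approx> Seq (copyn a) (Seq (Par t (tuple a ts)) (Par X Y))"
    by simp (rule eqv_seq_assoc, simp add: assms)
  also have "... \<approx> Seq (copyn a) (Par (Seq t X) (Seq (tuple a ts) Y))"
    by (rule seq_cong_right, rule eqv_interchange) (simp add: assms)
  finally show ?thesis .
qed

lemma tuple_seq_proj:
  "\<forall>t\<in>set ts. arity t = Some (a, 1) \<Longrightarrow> j < length ts \<Longrightarrow>
   Seq (tuple a ts) (proj (length ts) j) \<approx> ts ! j"
proof (induction ts arbitrary: j)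
  case (Cons t ts)
  let ?n = "length ts"
  have t: "arity t = Some (a, 1)" and tuple: "arity (tuple a ts) = Some (a, ?n)"
    using Cons.prems by auto
  show ?case
  proof (cases j)
    case 0
    have "Seq (tuple a (t # ts)) (proj (Suc ?n) 0)
        \<approx> Seq (tuple a (t # ts)) (Par (Id 1) (discardn ?n))"
      by (rule seq_cong_right, rule proj_Suc_0)
    also have "... \<approx> Seq (copyn a) (Par (Seq t (Id 1)) (Seq (tuple a ts) (discardn ?n)))"
      by (rule tuple_Cons_seq_par[OF t tuple]) simp_all
    also have "... \<approx> Seq (copyn a) (Par t (discardn a))"
      by (intro seq_cong_right eqv.cong_par eqv_seq_idr eqv_discard_nat[OF tuple]) (simp add: t)
    also have "... \<approx> t" by (rule copyn_counit_right[OF t])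
    finally show ?thesis using 0 by simp
  next
    case (Suc i)
    have i: "i < ?n" using Cons.prems Suc by simp
    have "Seq (tuple a (t # ts)) (proj (1 + ?n) (1 + i))
        \<approx> Seq (tuple a (t # ts)) (Par (discardn 1) (proj ?n i))"
      by (rule seq_cong_right, rule proj_add_right[OF i])
    also have "... \<approx> Seq (copyn a) (Par (Seq t (discardn 1)) (Seq (tuple a ts) (proj ?n i)))"
      by (rule tuple_Cons_seq_par[OF t tuple]) (simp_all add: i)
    also have "... \<approx> Seq (copyn a) (Par (discardn a) (ts ! i))"
      using Cons.prems i by (intro seq_cong_right eqv.cong_par eqv_discard_nat[OF t] Cons.IH) auto
    also have "... \<approx> ts ! i" by (rule copyn_counit_left) (use Cons.prems i in auto)
    finally show ?thesis using Suc by simp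
  qed
qed simp

lemma tuple_projs_eqv_Id: "tuple n (map (proj n) [0..<n]) \<approx> Id n"
proof (induction n)
  case 0
  show ?case by (simp add: eqv.refl)
next
  case (Suc n)
  let ?DD = "Par (discardn 1) (Id n)" and ?ps = "map (proj n) [0..<n]"
    and ?qs = "map (\<lambda>j. proj (Suc n) (Suc j)) [0..<n]"
  have "list_all2 eqv ?qs (map (Seq ?DD) ?ps)"
  proof (rule list_all2_all_nthI)
    fix j assume "j < length ?qs"
    then have j: "j < n" by simp
    have "proj (1 + n) (1 + j) \<approx> Par (discardn 1) (proj n j)" by (rule proj_add_right[OF j])
    also have "... \<approx> Seq ?DD (proj n j)" by (rule par_as_seq_left) (simp_all add: j)
    finally show "?qs ! j \<approx> map (Seq ?DD) ?ps ! j" using j by simp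
  qed simp
  then have "tuple (Suc n) ?qs \<approx> tuple (Suc n) (map (Seq ?DD) ?ps)" by (rule tuple_cong)
  also have "... \<approx> Seq ?DD (tuple n ?ps)" by (rule eqv.sym, rule seq_tuple) auto
  also have "... \<approx> Seq ?DD (Id n)" by (rule seq_cong_right, rule Suc.IH)
  also have "... \<approx> ?DD" by (rule eqv_seq_idr) simp
  finally have tail: "tuple (Suc n) ?qs \<approx> ?DD" .
  have "map (proj (Suc n)) [0..<Suc n] = proj (Suc n) 0 # ?qs"
    by (simp add: upt_conv_Cons map_Suc_upt[symmetric] del: upt_Suc)
  then have "tuple (Suc n) (map (proj (Suc n)) [0..<Suc n])
      = Seq (copyn (Suc n)) (Par (proj (Suc n) 0) (tuple (Suc n) ?qs))"
    by simp
  also have "... \<approx> Seq (copyn (Suc n)) (Par (Par (Id 1) (discardn n)) ?DD)"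
    by (rule seq_cong_right, rule eqv.cong_par, rule proj_Suc_0, rule tail)
  also have "... \<approx> Id (Suc n)" by (rule copyn_head_tail)
  finally show ?case .
qed

lemma circ_of_par_discardn:
  assumes e: "vars_below a1 e"
  shows "Par (circ_of a1 e) (discardn a2) \<approx> circ_of (a1 + a2) e"
proof -
  let ?f = "Par (Id a1) (discardn a2)"
  have "\<forall>j<a1. Seq ?f (proj a1 j) \<approx> circ_of (a1 + a2) (var_list a1 ! j)"
  proof (intro allI impI)
    fix j assume j: "j < a1"
    have "Seq ?f (proj a1 j) \<approx> Seq ?f (Par (proj a1 j) (Id 0))"
      by (rule seq_cong_right, rule eqv.sym, rule eqv_par_unitr) (simp add: j)
    also have "... \<approx> Par (Seq (Id a1) (proj a1 j)) (Seq (discardn a2) (Id 0))"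
      by (rule eqv_interchange) (simp add: j)
    also have "... \<approx> Par (proj a1 j) (discardn a2)"
      by (rule eqv.cong_par, rule eqv_seq_idl, simp add: j, rule eqv_seq_idr, simp)
    also have "... \<approx> proj (a1 + a2) j" by (rule eqv.sym, rule proj_add_left[OF j])
    finally show "Seq ?f (proj a1 j) \<approx> circ_of (a1 + a2) (var_list a1 ! j)" using j by simp
  qed
  then have "Seq ?f (circ_of a1 e) \<approx> circ_of (a1 + a2) (subst (var_list a1) e)"
    using e by (intro seq_circ_of) simp_all
  moreover have "Par (circ_of a1 e) (discardn a2) \<approx> Seq ?f (circ_of a1 e)"
    by (rule par_as_seq_right) (simp_all add: e)
  ultimately show ?thesis by (simp add: subst_var_list[OF e] eqv.trans)
qed

text \<open>Substituting \<open>drop a1 (var_list (a1 + a2))\<close> renames \<open>Var i\<close> to \<open>Var (a1 + i)\<close>.\<close>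

lemma discardn_par_circ_of:
  assumes e: "vars_below a2 e"
  shows "Par (discardn a1) (circ_of a2 e)
    \<approx> circ_of (a1 + a2) (subst (drop a1 (var_list (a1 + a2))) e)"
proof -
  let ?f = "Par (discardn a1) (Id a2)" and ?s = "drop a1 (var_list (a1 + a2))"
  have "\<forall>j<a2. Seq ?f (proj a2 j) \<approx> circ_of (a1 + a2) (?s ! j)"
  proof (intro allI impI)
    fix j assume j: "j < a2"
    have "Seq ?f (proj a2 j) \<approx> Par (discardn a1) (proj a2 j)"
      by (rule eqv.sym, rule par_as_seq_left) (simp_all add: j)
    also have "... \<approx> proj (a1 + a2) (a1 + j)" by (rule eqv.sym, rule proj_add_right[OF j])
    finally show "Seq ?f (proj a2 j) \<approx> circ_of (a1 + a2) (?s ! j)"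
      using j by (simp add: var_list_def)
  qed
  then have "Seq ?f (circ_of a2 e) \<approx> circ_of (a1 + a2) (subst ?s e)"
    using e by (intro seq_circ_of) simp_all
  moreover have "Par (discardn a1) (circ_of a2 e) \<approx> Seq ?f (circ_of a2 e)"
    by (rule par_as_seq_left) (simp_all add: e)
  ultimately show ?thesis by (rule eqv.trans[rotated])
qed

section \<open>Every circuit is the tuple of its symbolic outputs\<close>

lemma sem_Seq_var_list:
  assumes f: "arity f = Some (a, k)" and g: "arity g = Some (k, b)" and j: "j < b"
  shows "sem (Seq f g) (var_list a) ! j = subst (sem f (var_list a)) (sem g (var_list k) ! j)"
proof -
  let ?es = "sem f (var_list a)"
  have "sem (Seq f g) (var_list a) = sem g (map (subst ?es) (var_list k))"
    by (simp add: map_subst_var_list length_sem[OF f])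
  also have "... = map (subst ?es) (sem g (var_list k))" by (rule sem_map_subst[OF g]) simp
  finally show ?thesis using length_sem[OF g, of "var_list k"] j by simp
qed

lemma sem_Par_var_list:
  assumes f: "arity f = Some (a1, b1)" and g: "arity g = Some (a2, b2)"
  shows "sem (Par f g) (var_list (a1 + a2))
    = sem f (var_list a1) @ map (subst (drop a1 (var_list (a1 + a2)))) (sem g (var_list a2))"
proof -
  let ?s = "drop a1 (var_list (a1 + a2))"
  have "take a1 (var_list (a1 + a2)) = var_list a1" by (simp add: var_list_def take_map)
  moreover have "sem g ?s = map (subst ?s) (sem g (var_list a2))"
    using sem_map_subst[OF g, of "var_list a2" ?s] map_subst_var_list[of ?s a2] by simp
  ultimately show ?thesis by (simp add: cdom_arity[OF f])
qed

lemma proj_2_0: "proj 2 0 \<approx> Par (Id 1) Disc"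
proof -
  have "proj 2 0 \<approx> Par (Id 1) (discardn 1)" using proj_Suc_0[of 1] by (simp add: numeral_eq_Suc)
  also have "... \<approx> Par (Id 1) Disc" by (rule par_cong_right, rule discardn_1)
  finally show ?thesis .
qed

lemma proj_2_1: "proj 2 1 \<approx> Par Disc (Id 1)"
proof -
  have "proj 2 1 \<approx> Par (discardn 1) (proj 1 0)"
    using proj_add_right[of 0 1 1] by (simp add: numeral_eq_Suc)
  also have "... \<approx> Par Disc (Id 1)" by (rule eqv.cong_par, rule discardn_1, rule proj_1_0)
  finally show ?thesis .
qed

lemma copyn_2_projs: "Seq (copyn 2) (Par (proj 2 0) (proj 2 1)) \<approx> Id 2"
proof -
  have "Seq (copyn 2) (Par (proj 2 0) (proj 2 1))
      \<approx> Seq (copyn 2) (Par (proj 2 0) (Seq (copyn 2) (Par (proj 2 1) (discardn 2))))"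
    by (rule seq_cong_right, rule par_cong_right, rule eqv.sym, rule copyn_counit_right) simp
  also have "... = tuple 2 (map (proj 2) [0..<2])" by (simp add: numeral_eq_Suc)
  also have "... \<approx> Id 2" by (rule tuple_projs_eqv_Id)
  finally show ?thesis .
qed

lemma seq_proj_1_0: "arity c = Some (a, 1) \<Longrightarrow> Seq c (proj 1 0) \<approx> c"
  by (rule eqv.trans, rule seq_cong_right, rule proj_1_0, rule eqv_seq_idr) simp

lemma gen_binop_seq_proj:
  "gen_dom g = 2 \<Longrightarrow> gen_cod g = 1 \<Longrightarrow> Seq (Gen g) (proj 1 0) \<approx> binop 2 g (proj 2 0) (proj 2 1)"
proof -
  assume g: "gen_dom g = 2" "gen_cod g = 1"
  have "Seq (Gen g) (proj 1 0) \<approx> Gen g" by (rule seq_proj_1_0) (simp add: g)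
  also have "... \<approx> Seq (Id 2) (Gen g)" by (rule eqv.sym, rule eqv_seq_idl) (simp add: g)
  also have "... \<approx> Seq (Seq (copyn 2) (Par (proj 2 0) (proj 2 1))) (Gen g)"
    by (rule seq_cong_left, rule eqv.sym, rule copyn_2_projs)
  finally show ?thesis by (simp add: binop_def)
qed

lemma gen_const_seq_proj:
  "gen_dom g = 0 \<Longrightarrow> gen_cod g = 1 \<Longrightarrow> Seq (Gen g) (proj 1 0) \<approx> Seq (discardn 0) (Gen g)"
proof -
  assume g: "gen_dom g = 0" "gen_cod g = 1"
  have "Seq (Gen g) (proj 1 0) \<approx> Gen g" by (rule seq_proj_1_0) (simp add: g)
  also have "... \<approx> Seq (Id 0) (Gen g)" by (rule eqv.sym, rule eqv_seq_idl) (simp add: g)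
  finally show ?thesis by simp
qed

lemma Copy_seq_proj_0: "Seq Cpy (proj 2 0) \<approx> proj 1 0"
proof -
  have "Seq Cpy (proj 2 0) \<approx> Seq Cpy (Par (Id 1) Disc)" by (rule seq_cong_right, rule proj_2_0)
  also have "... \<approx> Id 1" by (rule copy_unit_right)
  also have "... \<approx> proj 1 0" by (rule eqv.sym, rule proj_1_0)
  finally show ?thesis .
qed

lemma Copy_seq_proj_1: "Seq Cpy (proj 2 1) \<approx> proj 1 0"
proof -
  have "Seq Cpy (proj 2 1) \<approx> Seq Cpy (Par Disc (Id 1))" by (rule seq_cong_right, rule proj_2_1)
  also have "... \<approx> Id 1" by (rule eqv.copy_unit)
  also have "... \<approx> proj 1 0" by (rule eqv.sym, rule proj_1_0)
  finally show ?thesis .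
qed

lemma Sym_seq_proj_0: "Seq Sym (proj 2 0) \<approx> proj 2 1"
proof -
  have "Seq Sym (proj 2 0) \<approx> Seq (braid 1) (Par (Id 1) Disc)"
    by (rule eqv.cong_seq, rule eqv.sym, rule braid_1_eqv_Sym, rule proj_2_0)
  also have "... \<approx> Par Disc (Id 1)" by (rule braid_Id_discard)
  also have "... \<approx> proj 2 1" by (rule eqv.sym, rule proj_2_1)
  finally show ?thesis .
qed

lemma Sym_seq_proj_1: "Seq Sym (proj 2 1) \<approx> proj 2 0"
proof -
  have "Seq Sym (proj 2 1) \<approx> Seq (braid 1) (Par Disc (Id 1))"
    by (rule eqv.cong_seq, rule eqv.sym, rule braid_1_eqv_Sym, rule proj_2_1)
  also have "... \<approx> Par (Id 1) Disc" by (rule braid_discard_Id) simp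
  also have "... \<approx> proj 2 0" by (rule eqv.sym, rule proj_2_0)
  finally show ?thesis .
qed

definition outputs_eqv_sem :: "circ \<Rightarrow> bool" where
  "outputs_eqv_sem c \<longleftrightarrow> (\<forall>a b j. arity c = Some (a, b) \<longrightarrow> j < b \<longrightarrow>
     Seq c (proj b j) \<approx> circ_of a (sem c (var_list a) ! j))"

lemma outputs_eqv_sem_Gen: "outputs_eqv_sem (Gen g)"
  unfolding outputs_eqv_sem_def
proof (intro allI impI)
  fix a b j assume g: "arity (Gen g) = Some (a, b)" and j: "j < b"
  show "Seq (Gen g) (proj b j) \<approx> circ_of a (sem (Gen g) (var_list a) ! j)"
  proof (cases g)
    case Copy
    with g j have "a = 1" "b = 2" "j = 0 \<or> j = 1" by auto
    with Copy show ?thesis using Copy_seq_proj_0 Copy_seq_proj_1 by (auto simp: var_list_1)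
  qed (use g j gen_const_seq_proj gen_binop_seq_proj in auto)
qed

lemma outputs_eqv_sem_Id: "outputs_eqv_sem (Id n)"
  by (auto simp: outputs_eqv_sem_def intro: eqv_seq_idl)

lemma outputs_eqv_sem_Sym: "outputs_eqv_sem Sym"
  unfolding outputs_eqv_sem_def
proof (intro allI impI)
  fix a b j assume "arity Sym = Some (a, b)" and "j < b"
  then have "a = 2" "b = 2" "j = 0 \<or> j = 1" by auto
  then show "Seq Sym (proj b j) \<approx> circ_of a (sem Sym (var_list a) ! j)"
    using Sym_seq_proj_0 Sym_seq_proj_1 by (auto simp: var_list_2)
qed

lemma outputs_eqv_sem_Seq:
  assumes "outputs_eqv_sem f" and "outputs_eqv_sem g"
  shows "outputs_eqv_sem (Seq f g)"
  unfolding outputs_eqv_sem_def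
proof (intro allI impI)
  fix a b j assume "arity (Seq f g) = Some (a, b)" and j: "j < b"
  then obtain k where f: "arity f = Some (a, k)" and g: "arity g = Some (k, b)"
    by (auto split: option.splits if_splits)
  have "Seq (Seq f g) (proj b j) \<approx> Seq f (Seq g (proj b j))"
    by (rule eqv_seq_assoc) (simp add: f g j)
  also have "... \<approx> Seq f (circ_of k (sem g (var_list k) ! j))"
    using assms(2) g j by (intro seq_cong_right) (simp add: outputs_eqv_sem_def)
  also have "... \<approx> circ_of a (subst (sem f (var_list a)) (sem g (var_list k) ! j))"
    using assms(1) f vars_below_sem_var_list[OF g j]
    by (intro seq_circ_of) (simp_all add: outputs_eqv_sem_def length_sem)
  finally show "Seq (Seq f g) (proj b j) \<approx> circ_of a (sem (Seq f g) (var_list a) ! j)"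
    unfolding sem_Seq_var_list[OF f g j] .
qed

lemma Par_seq_proj_left:
  assumes f: "arity f = Some (a1, b1)" and g: "arity g = Some (a2, b2)" and j: "j < b1"
  shows "Seq (Par f g) (proj (b1 + b2) j) \<approx> Par (Seq f (proj b1 j)) (discardn a2)"
proof -
  have "Seq (Par f g) (proj (b1 + b2) j) \<approx> Seq (Par f g) (Par (proj b1 j) (discardn b2))"
    by (rule seq_cong_right, rule proj_add_left[OF j])
  also have "... \<approx> Par (Seq f (proj b1 j)) (Seq g (discardn b2))"
    by (rule eqv_interchange) (simp add: f g j)
  also have "... \<approx> Par (Seq f (proj b1 j)) (discardn a2)"
    by (rule par_cong_right, rule eqv_discard_nat[OF g])
  finally show ?thesis .
qed

lemma Par_seq_proj_right:
  assumes f: "arity f = Some (a1, b1)" and g: "arity g = Some (a2, b2)" and i: "i < b2"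
  shows "Seq (Par f g) (proj (b1 + b2) (b1 + i)) \<approx> Par (discardn a1) (Seq g (proj b2 i))"
proof -
  have "Seq (Par f g) (proj (b1 + b2) (b1 + i)) \<approx> Seq (Par f g) (Par (discardn b1) (proj b2 i))"
    by (rule seq_cong_right, rule proj_add_right[OF i])
  also have "... \<approx> Par (Seq f (discardn b1)) (Seq g (proj b2 i))"
    by (rule eqv_interchange) (simp add: f g i)
  also have "... \<approx> Par (discardn a1) (Seq g (proj b2 i))"
    by (rule par_cong_left, rule eqv_discard_nat[OF f])
  finally show ?thesis .
qed

lemma outputs_eqv_sem_Par:
  assumes IH: "outputs_eqv_sem f" "outputs_eqv_sem g"
  shows "outputs_eqv_sem (Par f g)"
  unfolding outputs_eqv_sem_def
proof (intro allI impI)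
  fix a b j assume "arity (Par f g) = Some (a, b)" and j: "j < b"
  then obtain a1 b1 a2 b2 where f: "arity f = Some (a1, b1)" and g: "arity g = Some (a2, b2)"
    and ab: "a = a1 + a2" "b = b1 + b2"
    by (auto split: option.splits)
  have lf: "length (sem f (var_list a1)) = b1" using length_sem[OF f] by simp
  show "Seq (Par f g) (proj b j) \<approx> circ_of a (sem (Par f g) (var_list a) ! j)"
  proof (cases "j < b1")
    case True
    let ?e = "sem f (var_list a1) ! j"
    have "Seq (Par f g) (proj b j) \<approx> Par (Seq f (proj b1 j)) (discardn a2)"
      unfolding ab by (rule Par_seq_proj_left[OF f g True])
    also have "... \<approx> Par (circ_of a1 ?e) (discardn a2)"
      using IH(1) f True by (intro par_cong_left) (simp add: outputs_eqv_sem_def)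
    also have "... \<approx> circ_of (a1 + a2) ?e"
      by (rule circ_of_par_discardn, rule vars_below_sem_var_list[OF f True])
    finally show ?thesis
      unfolding ab sem_Par_var_list[OF f g] using True lf by (simp add: nth_append)
  next
    case False
    then obtain i where ji: "j = b1 + i" and i: "i < b2"
      using j ab by (metis add_less_cancel_left le_Suc_ex not_less)
    let ?s = "drop a1 (var_list (a1 + a2))" and ?e = "sem g (var_list a2) ! i"
    have "Seq (Par f g) (proj b j) \<approx> Par (discardn a1) (Seq g (proj b2 i))"
      unfolding ab ji by (rule Par_seq_proj_right[OF f g i])
    also have "... \<approx> Par (discardn a1) (circ_of a2 ?e)"
      using IH(2) g i by (intro par_cong_right) (simp add: outputs_eqv_sem_def)
    also have "... \<approx> circ_of (a1 + a2) (subst ?s ?e)"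
      by (rule discardn_par_circ_of, rule vars_below_sem_var_list[OF g i])
    finally show ?thesis
      unfolding ab sem_Par_var_list[OF f g] using ji i lf length_sem[OF g, of "var_list a2"]
      by (simp add: nth_append)
  qed
qed

lemma outputs_eqv_sem: "outputs_eqv_sem c"
  by (induction c) (simp_all add: outputs_eqv_sem_Gen outputs_eqv_sem_Id outputs_eqv_sem_Sym
      outputs_eqv_sem_Seq outputs_eqv_sem_Par)

lemma seq_proj_eqv_circ_of_sem:
  "arity c = Some (a, b) \<Longrightarrow> j < b \<Longrightarrow> Seq c (proj b j) \<approx> circ_of a (sem c (var_list a) ! j)"
  using outputs_eqv_sem[of c] by (simp add: outputs_eqv_sem_def)

lemma circ_eqv_tuple_sem:
  "arity c = Some (a, b) \<Longrightarrow> c \<approx> tuple a (map (circ_of a) (sem c (var_list a)))"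
proof -
  assume c: "arity c = Some (a, b)"
  have "c \<approx> Seq c (Id b)" by (rule eqv.sym, rule eqv_seq_idr) (simp add: c)
  also have "... \<approx> Seq c (tuple b (map (proj b) [0..<b]))"
    by (rule seq_cong_right, rule eqv.sym, rule tuple_projs_eqv_Id)
  also have "... \<approx> tuple a (map (Seq c) (map (proj b) [0..<b]))" by (rule seq_tuple[OF c]) auto
  also have "... \<approx> tuple a (map (circ_of a) (sem c (var_list a)))"
    by (rule tuple_cong)
      (auto simp: list_all2_conv_all_nth length_sem[OF c] intro: seq_proj_eqv_circ_of_sem[OF c])
  finally show ?thesis .
qed

abbreviation expr_eqv :: "nat \<Rightarrow> bexp \<Rightarrow> bexp \<Rightarrow> bool" where
  "expr_eqv a e e' \<equiv> circ_of a e \<approx> circ_of a e'"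

lemma tuple_seq_eqv_circ_of_sem:
  assumes l: "arity l = Some (k, 1)" and es: "length es = k" "\<forall>e\<in>set es. vars_below a e"
  shows "Seq (tuple a (map (circ_of a) es)) l \<approx> circ_of a (subst es (sem l (var_list k) ! 0))"
proof -
  let ?F = "tuple a (map (circ_of a) es)"
  have "Seq ?F l \<approx> Seq ?F (Seq l (proj 1 0))"
    by (rule seq_cong_right, rule eqv.sym, rule seq_proj_1_0[OF l])
  also have "... \<approx> Seq ?F (circ_of k (sem l (var_list k) ! 0))"
    by (rule seq_cong_right, rule seq_proj_eqv_circ_of_sem[OF l]) simp
  also have "... \<approx> circ_of a (subst es (sem l (var_list k) ! 0))"
  proof (rule seq_circ_of)
    show "arity ?F = Some (a, k)" using es by simp
    show "\<forall>j<k. Seq ?F (proj k j) \<approx> circ_of a (es ! j)"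
      using tuple_seq_proj[of "map (circ_of a) es" a] es by simp
    show "vars_below k (sem l (var_list k) ! 0)" by (rule vars_below_sem_var_list[OF l]) simp
  qed (use es in simp)
  finally show ?thesis .
qed

text \<open>Precomposing both sides with a tuple of expression circuits turns each equation of \<open>E\<close>
  between circuits \<open>k \<rightarrow> 1\<close> into an identity between expressions.\<close>

lemma expr_eqv_of_circ_eqv:
  assumes lr: "l \<approx> r" and "arity l = Some (k, 1)" and "arity r = Some (k, 1)"
    and "length es = k" and "\<forall>e\<in>set es. vars_below a e"
  shows "expr_eqv a (subst es (sem l (var_list k) ! 0)) (subst es (sem r (var_list k) ! 0))"
proof -
  have "circ_of a (subst es (sem l (var_list k) ! 0)) \<approx> Seq (tuple a (map (circ_of a) es)) l"
    by (rule eqv.sym, rule tuple_seq_eqv_circ_of_sem) (use assms in auto)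
  also have "... \<approx> Seq (tuple a (map (circ_of a) es)) r" by (rule seq_cong_right, rule lr)
  also have "... \<approx> circ_of a (subst es (sem r (var_list k) ! 0))"
    by (rule tuple_seq_eqv_circ_of_sem) (use assms in auto)
  finally show ?thesis .
qed

lemma expr_xor_commute:
  "vars_below a e1 \<Longrightarrow> vars_below a e2 \<Longrightarrow> expr_eqv a (Xor e2 e1) (Xor e1 e2)"
  using expr_eqv_of_circ_eqv[OF eqv.add_comm, of 2 "[e1, e2]" a] by (simp add: var_list_2)

lemma expr_xor_assoc:
  "vars_below a e1 \<Longrightarrow> vars_below a e2 \<Longrightarrow> vars_below a e3 \<Longrightarrow>
   expr_eqv a (Xor (Xor e1 e2) e3) (Xor e1 (Xor e2 e3))"
  using expr_eqv_of_circ_eqv[OF eqv.add_assoc, of 3 "[e1, e2, e3]" a] by (simp add: var_list_3)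

lemma expr_xor_Fls_left: "vars_below a e \<Longrightarrow> expr_eqv a (Xor Fls e) e"
  using expr_eqv_of_circ_eqv[OF eqv.add_unit, of 1 "[e]" a] by (simp add: var_list_1)

lemma expr_xor_self: "vars_below a e \<Longrightarrow> expr_eqv a (Xor e e) Fls"
  using expr_eqv_of_circ_eqv[OF eqv.copy_add, of 1 "[e]" a] by (simp add: var_list_1)

lemma expr_conj_commute:
  "vars_below a e1 \<Longrightarrow> vars_below a e2 \<Longrightarrow> expr_eqv a (Conj e2 e1) (Conj e1 e2)"
  using expr_eqv_of_circ_eqv[OF eqv.and_comm, of 2 "[e1, e2]" a] by (simp add: var_list_2)

lemma expr_conj_assoc:
  "vars_below a e1 \<Longrightarrow> vars_below a e2 \<Longrightarrow> vars_below a e3 \<Longrightarrow>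
   expr_eqv a (Conj (Conj e1 e2) e3) (Conj e1 (Conj e2 e3))"
  using expr_eqv_of_circ_eqv[OF eqv.and_assoc, of 3 "[e1, e2, e3]" a] by (simp add: var_list_3)

lemma expr_conj_Tru_left: "vars_below a e \<Longrightarrow> expr_eqv a (Conj Tru e) e"
  using expr_eqv_of_circ_eqv[OF eqv.and_unit, of 1 "[e]" a] by (simp add: var_list_1)

lemma expr_conj_idem: "vars_below a e \<Longrightarrow> expr_eqv a (Conj e e) e"
  using expr_eqv_of_circ_eqv[OF eqv.copy_and, of 1 "[e]" a] by (simp add: var_list_1)

lemma expr_conj_xor_distrib_left:
  "vars_below a e1 \<Longrightarrow> vars_below a e2 \<Longrightarrow> vars_below a e3 \<Longrightarrow>
   expr_eqv a (Conj e1 (Xor e2 e3)) (Xor (Conj e1 e2) (Conj e1 e3))"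
  using expr_eqv_of_circ_eqv[OF eqv.distrib, of 3 "[e1, e2, e3]" a] by (simp add: var_list_3)

lemma expr_xor_cong:
  "expr_eqv a e1 e1' \<Longrightarrow> expr_eqv a e2 e2' \<Longrightarrow> expr_eqv a (Xor e1 e2) (Xor e1' e2')"
  by simp (rule binop_cong)

lemma expr_conj_cong:
  "expr_eqv a e1 e1' \<Longrightarrow> expr_eqv a e2 e2' \<Longrightarrow> expr_eqv a (Conj e1 e2) (Conj e1' e2')"
  by simp (rule binop_cong)

declare circ_of.simps [simp del]

lemma expr_xor_Fls_right: "vars_below a e \<Longrightarrow> expr_eqv a (Xor e Fls) e"
  by (rule eqv.trans, rule expr_xor_commute, simp, simp, rule expr_xor_Fls_left)

lemma expr_conj_Tru_right: "vars_below a e \<Longrightarrow> expr_eqv a (Conj e Tru) e"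
  by (rule eqv.trans, rule expr_conj_commute, simp, simp, rule expr_conj_Tru_left)

lemma expr_conj_Fls_left:
  assumes e: "vars_below a e"
  shows "expr_eqv a (Conj Fls e) Fls"
proof -
  have "expr_eqv a (Conj Fls e) (Conj (Xor e e) e)"
    by (rule expr_conj_cong, rule eqv.sym, rule expr_xor_self[OF e], rule eqv.refl)
  also have "expr_eqv a (Conj (Xor e e) e) (Conj e (Xor e e))"
    by (rule expr_conj_commute) (simp_all add: e)
  also have "expr_eqv a (Conj e (Xor e e)) (Xor (Conj e e) (Conj e e))"
    by (rule expr_conj_xor_distrib_left) (simp_all add: e)
  also have "expr_eqv a (Xor (Conj e e) (Conj e e)) (Xor e e)"
    by (rule expr_xor_cong; rule expr_conj_idem[OF e])
  also have "expr_eqv a (Xor e e) Fls" by (rule expr_xor_self[OF e])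
  finally show ?thesis .
qed

lemma expr_conj_Fls_right: "vars_below a e \<Longrightarrow> expr_eqv a (Conj e Fls) Fls"
  by (rule eqv.trans, rule expr_conj_commute, simp, simp, rule expr_conj_Fls_left)

lemma expr_conj_xor_distrib_right:
  assumes e: "vars_below a e1" "vars_below a e2" "vars_below a e3"
  shows "expr_eqv a (Conj (Xor e1 e2) e3) (Xor (Conj e1 e3) (Conj e2 e3))"
proof -
  have "expr_eqv a (Conj (Xor e1 e2) e3) (Conj e3 (Xor e1 e2))"
    by (rule expr_conj_commute) (simp_all add: e)
  also have "expr_eqv a (Conj e3 (Xor e1 e2)) (Xor (Conj e3 e1) (Conj e3 e2))"
    by (rule expr_conj_xor_distrib_left) (simp_all add: e)
  also have "expr_eqv a (Xor (Conj e3 e1) (Conj e3 e2)) (Xor (Conj e1 e3) (Conj e2 e3))"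
    by (rule expr_xor_cong; rule expr_conj_commute) (simp_all add: e)
  finally show ?thesis .
qed

section \<open>Algebraic normal form\<close>

text \<open>A monomial is a list of variables, a polynomial a list of monomials; \<open>anf\<close> multiplies out
  with \<^const>\<open>List.insert\<close>, so that no variable occurs twice in a monomial.\<close>

fun mon_expr :: "nat list \<Rightarrow> bexp" where
  "mon_expr [] = Tru"
| "mon_expr (x # xs) = Conj (Var x) (mon_expr xs)"

fun poly_expr :: "nat list list \<Rightarrow> bexp" where
  "poly_expr [] = Fls"
| "poly_expr (m # p) = Xor (mon_expr m) (poly_expr p)"

definition mon_mult :: "nat list \<Rightarrow> nat list \<Rightarrow> nat list" where
  "mon_mult m1 m2 = foldr List.insert m1 m2"

definition poly_mult :: "nat list list \<Rightarrow> nat list list \<Rightarrow> nat list list" where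
  "poly_mult p q = concat (map (\<lambda>m. map (mon_mult m) q) p)"

fun anf :: "bexp \<Rightarrow> nat list list" where
  "anf (Var i) = [[i]]"
| "anf Fls = []"
| "anf Tru = [[]]"
| "anf (Xor e1 e2) = anf e1 @ anf e2"
| "anf (Conj e1 e2) = poly_mult (anf e1) (anf e2)"

lemma set_mon_mult [simp]: "set (mon_mult m1 m2) = set m1 \<union> set m2"
  by (induction m1) (auto simp: mon_mult_def)

lemma distinct_mon_mult [simp]: "distinct m2 \<Longrightarrow> distinct (mon_mult m1 m2)"
  by (induction m1) (auto simp: mon_mult_def)

lemma vars_mon_expr [simp]: "vars (mon_expr m) = set m"
  by (induction m) auto

lemma vars_below_mon_expr: "vars_below a (mon_expr m) \<longleftrightarrow> (\<forall>x\<in>set m. x < a)"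
  by (induction m) auto

lemma vars_below_poly_expr: "vars_below a (poly_expr p) \<longleftrightarrow> (\<forall>m\<in>set p. \<forall>x\<in>set m. x < a)"
  by (induction p) (auto simp: vars_below_mon_expr)

lemma vars_below_anf: "vars_below a e \<Longrightarrow> vars_below a (poly_expr (anf e))"
  by (induction e) (auto simp: vars_below_poly_expr vars_below_mon_expr poly_mult_def)

lemma distinct_anf: "m \<in> set (anf e) \<Longrightarrow> distinct m"
  by (induction e arbitrary: m) (auto simp: poly_mult_def)

lemma expr_conj_Var_absorb:
  "x \<in> set xs \<Longrightarrow> vars_below a (mon_expr xs) \<Longrightarrow> expr_eqv a (Conj (Var x) (mon_expr xs)) (mon_expr xs)"
proof (induction xs)
  case (Cons y ys)
  have x: "x < a" using Cons.prems by (auto simp: vars_below_mon_expr)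
  show ?case
  proof (cases "x = y")
    case True
    have "expr_eqv a (Conj (Var x) (Conj (Var x) (mon_expr ys)))
        (Conj (Conj (Var x) (Var x)) (mon_expr ys))"
      by (rule eqv.sym, rule expr_conj_assoc) (use Cons.prems x in auto)
    also have "expr_eqv a (Conj (Conj (Var x) (Var x)) (mon_expr ys)) (Conj (Var x) (mon_expr ys))"
      by (rule expr_conj_cong, rule expr_conj_idem, simp add: x, rule eqv.refl)
    finally show ?thesis using True by simp
  next
    case False
    then have "x \<in> set ys" using Cons.prems by simp
    have "expr_eqv a (Conj (Var x) (Conj (Var y) (mon_expr ys)))
        (Conj (Conj (Var x) (Var y)) (mon_expr ys))"
      by (rule eqv.sym, rule expr_conj_assoc) (use Cons.prems x in auto)
    also have "expr_eqv a (Conj (Conj (Var x) (Var y)) (mon_expr ys))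
        (Conj (Conj (Var y) (Var x)) (mon_expr ys))"
      by (rule expr_conj_cong, rule expr_conj_commute, simp_all add: eqv.refl)
        (use Cons.prems x in auto)
    also have "expr_eqv a (Conj (Conj (Var y) (Var x)) (mon_expr ys))
        (Conj (Var y) (Conj (Var x) (mon_expr ys)))"
      by (rule expr_conj_assoc) (use Cons.prems x in auto)
    also have "expr_eqv a (Conj (Var y) (Conj (Var x) (mon_expr ys))) (Conj (Var y) (mon_expr ys))"
      by (rule expr_conj_cong, rule eqv.refl, rule Cons.IH) (use Cons.prems \<open>x \<in> set ys\<close> in auto)
    finally show ?thesis by simp
  qed
qed simp

lemma mon_expr_insert:
  "x < a \<Longrightarrow> vars_below a (mon_expr xs) \<Longrightarrow>
   expr_eqv a (mon_expr (List.insert x xs)) (Conj (Var x) (mon_expr xs))"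
  by (cases "x \<in> set xs") (auto intro: eqv.sym[OF expr_conj_Var_absorb] eqv.refl)

lemma mon_expr_mult:
  "vars_below a (mon_expr m1) \<Longrightarrow> vars_below a (mon_expr m2) \<Longrightarrow>
   expr_eqv a (mon_expr (mon_mult m1 m2)) (Conj (mon_expr m1) (mon_expr m2))"
proof (induction m1)
  case Nil
  show ?case by (simp add: mon_mult_def) (rule eqv.sym, rule expr_conj_Tru_left, use Nil in simp)
next
  case (Cons x m1)
  have "mon_expr (mon_mult (x # m1) m2) = mon_expr (List.insert x (mon_mult m1 m2))"
    by (simp add: mon_mult_def)
  also have "expr_eqv a (mon_expr (List.insert x (mon_mult m1 m2)))
      (Conj (Var x) (mon_expr (mon_mult m1 m2)))"
    by (rule mon_expr_insert) (use Cons.prems in \<open>auto simp: vars_below_mon_expr\<close>)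
  also have "expr_eqv a (Conj (Var x) (mon_expr (mon_mult m1 m2)))
      (Conj (Var x) (Conj (mon_expr m1) (mon_expr m2)))"
    by (rule expr_conj_cong, rule eqv.refl, rule Cons.IH) (use Cons.prems in auto)
  also have "expr_eqv a (Conj (Var x) (Conj (mon_expr m1) (mon_expr m2)))
      (Conj (Conj (Var x) (mon_expr m1)) (mon_expr m2))"
    by (rule eqv.sym, rule expr_conj_assoc) (use Cons.prems in auto)
  finally show ?case by simp
qed

lemma poly_expr_append:
  "vars_below a (poly_expr p) \<Longrightarrow> vars_below a (poly_expr q) \<Longrightarrow>
   expr_eqv a (poly_expr (p @ q)) (Xor (poly_expr p) (poly_expr q))"
proof (induction p)
  case Nil
  show ?case by simp (rule eqv.sym, rule expr_xor_Fls_left, use Nil in simp)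
next
  case (Cons m p)
  have "expr_eqv a (Xor (mon_expr m) (poly_expr (p @ q)))
      (Xor (mon_expr m) (Xor (poly_expr p) (poly_expr q)))"
    by (rule expr_xor_cong, rule eqv.refl, rule Cons.IH) (use Cons.prems in auto)
  also have "expr_eqv a (Xor (mon_expr m) (Xor (poly_expr p) (poly_expr q)))
      (Xor (Xor (mon_expr m) (poly_expr p)) (poly_expr q))"
    by (rule eqv.sym, rule expr_xor_assoc) (use Cons.prems in auto)
  finally show ?case by simp
qed

lemma poly_expr_map_mon_mult:
  "vars_below a (mon_expr m) \<Longrightarrow> vars_below a (poly_expr q) \<Longrightarrow>
   expr_eqv a (poly_expr (map (mon_mult m) q)) (Conj (mon_expr m) (poly_expr q))"
proof (induction q)
  case Nil
  show ?case by simp (rule eqv.sym, rule expr_conj_Fls_right, use Nil in simp)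
next
  case (Cons m' q)
  have "expr_eqv a (Xor (mon_expr (mon_mult m m')) (poly_expr (map (mon_mult m) q)))
      (Xor (Conj (mon_expr m) (mon_expr m')) (Conj (mon_expr m) (poly_expr q)))"
  proof (rule expr_xor_cong)
    show "expr_eqv a (mon_expr (mon_mult m m')) (Conj (mon_expr m) (mon_expr m'))"
      by (rule mon_expr_mult) (use Cons.prems in auto)
    show "expr_eqv a (poly_expr (map (mon_mult m) q)) (Conj (mon_expr m) (poly_expr q))"
      by (rule Cons.IH) (use Cons.prems in auto)
  qed
  also have "expr_eqv a (Xor (Conj (mon_expr m) (mon_expr m')) (Conj (mon_expr m) (poly_expr q)))
      (Conj (mon_expr m) (Xor (mon_expr m') (poly_expr q)))"
    by (rule eqv.sym, rule expr_conj_xor_distrib_left) (use Cons.prems in auto)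
  finally show ?case by simp
qed

lemma poly_expr_mult:
  "vars_below a (poly_expr p) \<Longrightarrow> vars_below a (poly_expr q) \<Longrightarrow>
   expr_eqv a (poly_expr (poly_mult p q)) (Conj (poly_expr p) (poly_expr q))"
proof (induction p)
  case Nil
  show ?case by (simp add: poly_mult_def) (rule eqv.sym, rule expr_conj_Fls_left, use Nil in simp)
next
  case (Cons m p)
  have "poly_expr (poly_mult (m # p) q) = poly_expr (map (mon_mult m) q @ poly_mult p q)"
    by (simp add: poly_mult_def)
  also have "expr_eqv a (poly_expr (map (mon_mult m) q @ poly_mult p q))
      (Xor (poly_expr (map (mon_mult m) q)) (poly_expr (poly_mult p q)))"
    by (rule poly_expr_append)
      (use Cons.prems in \<open>auto simp: vars_below_poly_expr vars_below_mon_expr poly_mult_def\<close>)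
  also have "expr_eqv a (Xor (poly_expr (map (mon_mult m) q)) (poly_expr (poly_mult p q)))
      (Xor (Conj (mon_expr m) (poly_expr q)) (Conj (poly_expr p) (poly_expr q)))"
  proof (rule expr_xor_cong)
    show "expr_eqv a (poly_expr (map (mon_mult m) q)) (Conj (mon_expr m) (poly_expr q))"
      by (rule poly_expr_map_mon_mult) (use Cons.prems in auto)
    show "expr_eqv a (poly_expr (poly_mult p q)) (Conj (poly_expr p) (poly_expr q))"
      by (rule Cons.IH) (use Cons.prems in auto)
  qed
  also have "expr_eqv a (Xor (Conj (mon_expr m) (poly_expr q)) (Conj (poly_expr p) (poly_expr q)))
      (Conj (Xor (mon_expr m) (poly_expr p)) (poly_expr q))"
    by (rule eqv.sym, rule expr_conj_xor_distrib_right) (use Cons.prems in auto)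
  finally show ?case by simp
qed

lemma expr_eqv_anf: "vars_below a e \<Longrightarrow> expr_eqv a e (poly_expr (anf e))"
proof (induction e)
  case (Var i)
  have "expr_eqv a (Var i) (Conj (Var i) Tru)"
    by (rule eqv.sym, rule expr_conj_Tru_right) (use Var in simp)
  also have "expr_eqv a (Conj (Var i) Tru) (Xor (Conj (Var i) Tru) Fls)"
    by (rule eqv.sym, rule expr_xor_Fls_right) (use Var in simp)
  finally show ?case by simp
next
  case Fls
  show ?case by (simp add: eqv.refl)
next
  case Tru
  show ?case by simp (rule eqv.sym, rule expr_xor_Fls_right, simp)
next
  case (Xor e1 e2)
  have "expr_eqv a (Xor e1 e2) (Xor (poly_expr (anf e1)) (poly_expr (anf e2)))"
    using Xor by (intro expr_xor_cong) auto
  also have "expr_eqv a (Xor (poly_expr (anf e1)) (poly_expr (anf e2)))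
      (poly_expr (anf e1 @ anf e2))"
    by (rule eqv.sym, rule poly_expr_append) (use Xor.prems vars_below_anf in auto)
  finally show ?case by simp
next
  case (Conj e1 e2)
  have "expr_eqv a (Conj e1 e2) (Conj (poly_expr (anf e1)) (poly_expr (anf e2)))"
    using Conj by (intro expr_conj_cong) auto
  also have "expr_eqv a (Conj (poly_expr (anf e1)) (poly_expr (anf e2)))
      (poly_expr (poly_mult (anf e1) (anf e2)))"
    by (rule eqv.sym, rule poly_expr_mult) (use Conj.prems vars_below_anf in auto)
  finally show ?case by simp
qed

section \<open>Safety of normal forms\<close>

fun safe_expr :: "bexp \<Rightarrow> bool" where
  "safe_expr (Var i) = True"
| "safe_expr Fls = True"
| "safe_expr Tru = True"
| "safe_expr (Xor e1 e2) = (safe_expr e1 \<and> safe_expr e2)"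
| "safe_expr (Conj e1 e2) = (safe_expr e1 \<and> safe_expr e2 \<and> vars e1 \<inter> vars e2 = {})"

lemma safe_expr_mon_expr: "distinct m \<Longrightarrow> safe_expr (mon_expr m)"
  by (induction m) auto

lemma safe_expr_anf: "safe_expr (poly_expr (anf e))"
proof -
  have "\<forall>m\<in>set p. distinct m \<Longrightarrow> safe_expr (poly_expr p)" for p
    by (induction p) (auto simp: safe_expr_mon_expr)
  then show ?thesis using distinct_anf by blast
qed

fun and_free :: "circ \<Rightarrow> bool" where
  "and_free (Gen g) \<longleftrightarrow> g \<noteq> And"
| "and_free (Id n) \<longleftrightarrow> True"
| "and_free Sym \<longleftrightarrow> True"
| "and_free (Seq f g) \<longleftrightarrow> and_free f \<and> and_free g"
| "and_free (Par f g) \<longleftrightarrow> and_free f \<and> and_free g"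

lemma and_free_safe_in: "and_free c \<Longrightarrow> safe_in ds c"
  by (induction c arbitrary: ds) auto

lemma and_free_braid [simp]: "and_free (braid n)"
  by (induction n) auto

lemma and_free_copyn [simp]: "and_free (copyn n)"
  by (induction n) auto

lemma and_free_discardn [simp]: "and_free (discardn n)"
  by (induction n) auto

lemma and_free_proj [simp]: "and_free (proj n i)"
  by (simp add: proj_def)

lemma cdom_braid [simp]: "cdom (braid n) = Suc n"
  using cdom_arity[OF arity_braid] .

lemma cdom_copyn [simp]: "cdom (copyn n) = n"
  using cdom_arity[OF arity_copyn] .

lemma cdom_discardn [simp]: "cdom (discardn n) = n"
  using cdom_arity[OF arity_discardn] .

lemma cdom_circ_of [simp]: "vars_below a e \<Longrightarrow> cdom (circ_of a e) = a"
  using cdom_arity[OF arity_circ_of] .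

lemma outdeps_discardn [simp]: "length ds = n \<Longrightarrow> outdeps ds (discardn n) = []"
  by (induction n arbitrary: ds) auto

lemma outdeps_braid: "length ds = n \<Longrightarrow> outdeps (d # ds) (braid n) = ds @ [d]"
proof (induction n arbitrary: d ds)
  case (Suc n)
  then obtain d' ds' where "ds = d' # ds'" and "length ds' = n" by (cases ds) auto
  with Suc.IH show ?case by (simp add: numeral_eq_Suc)
qed simp

lemma outdeps_copyn: "length ds = n \<Longrightarrow> outdeps ds (copyn n) = ds @ ds"
proof (induction n arbitrary: ds)
  case (Suc n)
  then obtain d ds' where ds: "ds = d # ds'" and n: "length ds' = n" by (cases ds) auto
  have "outdeps ds (copyn (Suc n))
      = outdeps (d # d # ds' @ ds') (Par (Id 1) (Par (braid n) (Id n)))"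
    using Suc.IH[OF n] ds by (simp add: numeral_eq_Suc)
  also have "... = d # ds' @ [d] @ ds'" using outdeps_braid[OF n] n by simp
  finally show ?case using ds by simp
qed simp

lemma outdeps_proj: "length ds = n \<Longrightarrow> i < n \<Longrightarrow> outdeps ds (proj n i) = [ds ! i]"
  by (simp add: proj_def take_Suc_conv_app_nth hd_drop_conv_nth)

definition singletons :: "nat \<Rightarrow> nat set list" where
  "singletons a = map (\<lambda>i. {i}) [0..<a]"

lemma length_singletons [simp]: "length (singletons a) = a"
  by (simp add: singletons_def)

lemma outdeps_circ_of: "vars_below a e \<Longrightarrow> outdeps (singletons a) (circ_of a e) = [vars e]"
  by (induction e) (auto simp: circ_of.simps binop_def outdeps_copyn outdeps_proj singletons_def)

lemma safe_in_circ_of: "vars_below a e \<Longrightarrow> safe_expr e \<Longrightarrow> safe_in (singletons a) (circ_of a e)"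
  by (induction e)
    (simp_all add: circ_of.simps binop_def outdeps_copyn outdeps_circ_of and_free_safe_in)

lemma safe_in_tuple:
  "\<forall>t\<in>set ts. safe_in (singletons a) t \<and> cdom t = a \<Longrightarrow> safe_in (singletons a) (tuple a ts)"
  by (induction ts) (auto simp: and_free_safe_in outdeps_copyn)

definition anf_circ :: "nat \<Rightarrow> bexp list \<Rightarrow> circ" where
  "anf_circ a es = tuple a (map (\<lambda>e. circ_of a (poly_expr (anf e))) es)"

lemma arity_anf_circ:
  "\<forall>e\<in>set es. vars_below a e \<Longrightarrow> arity (anf_circ a es) = Some (a, length es)"
  by (simp add: anf_circ_def vars_below_anf)

lemma safe_anf_circ: "\<forall>e\<in>set es. vars_below a e \<Longrightarrow> safe (anf_circ a es)"
proof -
  assume es: "\<forall>e\<in>set es. vars_below a e"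
  have "safe_in (singletons a) (anf_circ a es)"
    unfolding anf_circ_def
    by (rule safe_in_tuple)
      (use es in \<open>auto intro!: safe_in_circ_of simp: vars_below_anf safe_expr_anf\<close>)
  then show ?thesis
    using cdom_arity[OF arity_anf_circ[OF es]] by (simp add: safe_def singletons_def)
qed

lemma eqv_anf_circ: "\<forall>e\<in>set es. vars_below a e \<Longrightarrow> tuple a (map (circ_of a) es) \<approx> anf_circ a es"
  unfolding anf_circ_def
  by (rule tuple_cong) (auto simp: list_all2_conv_all_nth intro: expr_eqv_anf)

theorem mainTheorem4:
  assumes "typed c a b"
  shows "\<exists>d. typed d a b \<and> safe d \<and> eqv c d"
proof -
  have c: "arity c = Some (a, b)" using assms by (simp add: typed_iff_arity)
  let ?es = "sem c (var_list a)"
  have es: "\<forall>e\<in>set ?es. vars_below a e"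
    using sem_vars_below[OF c _ vars_below_var_list] by simp
  have b: "length ?es = b" using length_sem[OF c] by simp
  have "c \<approx> tuple a (map (circ_of a) ?es)" by (rule circ_eqv_tuple_sem[OF c])
  also have "... \<approx> anf_circ a ?es" by (rule eqv_anf_circ[OF es])
  finally show ?thesis
    using arity_anf_circ[OF es] safe_anf_circ[OF es] b by (auto simp: typed_iff_arity)
qed

end
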